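(* Let $P$ be a finite, nonempty, ranked poset of width at most $3$. If $P$ is minimal automorphic, then $P$ is (isomorphic to) a 6-tower. Conversely, every 6-tower is automorphic.
   Context: All posets are finite. For a poset $P$ and $p\in P$, the rank $r(p)$ of $p$ is the largest $m$ such that there is a chain $p_0<p_1<\dots<p_m=p$ in $P$. The poset $P$ is ranked of rank $r(P)$ if every maximal chain of $P$ has exactly $r(P)+1$ elements. For integers $0\le i\le j$, $P(i,j)=\{p\in P: i\le r(p)\le j\}$ and $P(i)=P(i,i)$, each with the induced order. The width of $P$ is the size of its largest antichain. A subset $Q\subseteq P$ (with induced order) is a retract of $P$ if there is an order-preserving map $f:P\to Q$ with $f(q)=q$ for all $q\in Q$. The ordinal sum of posets $P_1,\dots,P_k$ ($k\ge 1$) is their disjoint union, ordered by the orders of the $P_i$ together with $p<q$ whenever $p\in P_i$, $q\in P_j$, $i<j$. The 6-crown $C_6$ is the poset on $\{x_0,x_1,x_2,y_0,y_1,y_2\}$ whose only strict comparabilities are $x_0<y_0>x_1<y_1>x_2<y_2>x_0$. A 6-stack is a ranked poset $P$ of rank $n\ge 1$ such that for each $0\le i<n$, $P(i,i+1)$ is isomorphic to $C_6$. A 6-tower is an ordinal sum of one or more posets each of which is either a two-element antichain or a 6-stack. A poset is automorphic if it has an automorphism with no fixed point; it is minimal automorphic if it is automorphic and no proper retract of it is automorphic. *)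

theory Defs
  imports Main
begin

text \<open>A finite poset is represented by a carrier set P and a relation le,
  which is a partial order on P. Subposets carry the induced order (same le).\<close>

definition poset_on :: "'a set \<Rightarrow> ('a \<Rightarrow> 'a \<Rightarrow> bool) \<Rightarrow> bool" where
  "poset_on P le \<longleftrightarrow>
     (\<forall>x\<in>P. le x x) \<and>
     (\<forall>x\<in>P. \<forall>y\<in>P. le x y \<and> le y x \<longrightarrow> x = y) \<and>
     (\<forall>x\<in>P. \<forall>y\<in>P. \<forall>z\<in>P. le x y \<and> le y z \<longrightarrow> le x z)"

definition strict :: "('a \<Rightarrow> 'a \<Rightarrow> bool) \<Rightarrow> 'a \<Rightarrow> 'a \<Rightarrow> bool" where
  "strict le x y \<longleftrightarrow> le x y \<and> x \<noteq> y"

definition rank_in :: "'a set \<Rightarrow> ('a \<Rightarrow> 'a \<Rightarrow> bool) \<Rightarrow> 'a \<Rightarrow> nat" where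
  "rank_in P le p = Max {length xs - 1 | xs. xs \<noteq> [] \<and> set xs \<subseteq> P \<and>
       sorted_wrt (strict le) xs \<and> last xs = p}"

definition chain_in :: "'a set \<Rightarrow> ('a \<Rightarrow> 'a \<Rightarrow> bool) \<Rightarrow> 'a set \<Rightarrow> bool" where
  "chain_in P le C \<longleftrightarrow> C \<subseteq> P \<and> (\<forall>x\<in>C. \<forall>y\<in>C. le x y \<or> le y x)"

definition maxchain_in :: "'a set \<Rightarrow> ('a \<Rightarrow> 'a \<Rightarrow> bool) \<Rightarrow> 'a set \<Rightarrow> bool" where
  "maxchain_in P le C \<longleftrightarrow> chain_in P le C \<and> (\<forall>D. chain_in P le D \<and> C \<subseteq> D \<longrightarrow> D = C)"

definition ranked_of_rank :: "'a set \<Rightarrow> ('a \<Rightarrow> 'a \<Rightarrow> bool) \<Rightarrow> nat \<Rightarrow> bool" where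
  "ranked_of_rank P le n \<longleftrightarrow> (\<forall>C. maxchain_in P le C \<longrightarrow> card C = n + 1)"

definition ranked :: "'a set \<Rightarrow> ('a \<Rightarrow> 'a \<Rightarrow> bool) \<Rightarrow> bool" where
  "ranked P le \<longleftrightarrow> (\<exists>n. ranked_of_rank P le n)"

definition levels :: "'a set \<Rightarrow> ('a \<Rightarrow> 'a \<Rightarrow> bool) \<Rightarrow> nat \<Rightarrow> nat \<Rightarrow> 'a set" where
  "levels P le i j = {p \<in> P. i \<le> rank_in P le p \<and> rank_in P le p \<le> j}"

definition antichain_in :: "'a set \<Rightarrow> ('a \<Rightarrow> 'a \<Rightarrow> bool) \<Rightarrow> 'a set \<Rightarrow> bool" where
  "antichain_in P le A \<longleftrightarrow> A \<subseteq> P \<and> (\<forall>x\<in>A. \<forall>y\<in>A. le x y \<longrightarrow> x = y)"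

definition width_le :: "'a set \<Rightarrow> ('a \<Rightarrow> 'a \<Rightarrow> bool) \<Rightarrow> nat \<Rightarrow> bool" where
  "width_le P le k \<longleftrightarrow> (\<forall>A. antichain_in P le A \<longrightarrow> card A \<le> k)"

text \<open>The 6-crown on {0..5}: x_i = i, y_i = 3+i (i = 0,1,2);
  x0<y0>x1<y1>x2<y2>x0, i.e. x_i < y_j iff j = i or j = i+2 mod 3.\<close>
definition C6 :: "nat set" where "C6 = {0..<6}"

definition C6_le :: "nat \<Rightarrow> nat \<Rightarrow> bool" where
  "C6_le a b \<longleftrightarrow> a = b \<or> (a < 3 \<and> 3 \<le> b \<and> (b - 3 = a \<or> b - 3 = (a + 2) mod 3))"

definition order_iso :: "'a set \<Rightarrow> ('a \<Rightarrow> 'a \<Rightarrow> bool) \<Rightarrow> 'b set \<Rightarrow> ('b \<Rightarrow> 'b \<Rightarrow> bool) \<Rightarrow> bool" where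
  "order_iso A leA B leB \<longleftrightarrow>
     (\<exists>f. bij_betw f A B \<and> (\<forall>x\<in>A. \<forall>y\<in>A. leA x y \<longleftrightarrow> leB (f x) (f y)))"

definition six_stack :: "'a set \<Rightarrow> ('a \<Rightarrow> 'a \<Rightarrow> bool) \<Rightarrow> bool" where
  "six_stack P le \<longleftrightarrow> (\<exists>n\<ge>1. ranked_of_rank P le n \<and>
      (\<forall>i<n. order_iso (levels P le i (i + 1)) le C6 C6_le))"

definition two_antichain :: "'a set \<Rightarrow> ('a \<Rightarrow> 'a \<Rightarrow> bool) \<Rightarrow> bool" where
  "two_antichain P le \<longleftrightarrow> card P = 2 \<and> antichain_in P le P"

definition six_tower :: "'a set \<Rightarrow> ('a \<Rightarrow> 'a \<Rightarrow> bool) \<Rightarrow> bool" where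
  "six_tower P le \<longleftrightarrow> (\<exists>Bs :: 'a set list. Bs \<noteq> [] \<and>
      \<Union>(set Bs) = P \<and>
      (\<forall>i<length Bs. \<forall>j<length Bs. i \<noteq> j \<longrightarrow> Bs ! i \<inter> Bs ! j = {}) \<and>
      (\<forall>i<length Bs. two_antichain (Bs ! i) le \<or> six_stack (Bs ! i) le) \<and>
      (\<forall>i<length Bs. \<forall>j<length Bs. i < j \<longrightarrow>
          (\<forall>x\<in>Bs ! i. \<forall>y\<in>Bs ! j. strict le x y)))"

definition automorphic :: "'a set \<Rightarrow> ('a \<Rightarrow> 'a \<Rightarrow> bool) \<Rightarrow> bool" where
  "automorphic P le \<longleftrightarrow> (\<exists>f. bij_betw f P P \<and>
      (\<forall>x\<in>P. \<forall>y\<in>P. le x y \<longleftrightarrow> le (f x) (f y)) \<and> (\<forall>x\<in>P. f x \<noteq> x))"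

definition retract_of :: "'a set \<Rightarrow> 'a set \<Rightarrow> ('a \<Rightarrow> 'a \<Rightarrow> bool) \<Rightarrow> bool" where
  "retract_of Q P le \<longleftrightarrow> Q \<subseteq> P \<and> (\<exists>f. f ` P \<subseteq> Q \<and>
      (\<forall>x\<in>P. \<forall>y\<in>P. le x y \<longrightarrow> le (f x) (f y)) \<and> (\<forall>q\<in>Q. f q = q))"

definition minimal_automorphic :: "'a set \<Rightarrow> ('a \<Rightarrow> 'a \<Rightarrow> bool) \<Rightarrow> bool" where
  "minimal_automorphic P le \<longleftrightarrow> automorphic P le \<and>
      (\<forall>Q. retract_of Q P le \<and> Q \<noteq> P \<longrightarrow> \<not> automorphic Q le)"

end

(*
  Let r be the rank function of P and s a fixed-point-free automorphism; s preserves r.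
  Minimality is used through two retractions. If an element of rank k > 0 had a unique lower
  cover, folding all elements of rank k with a unique lower cover onto that cover would be a
  retraction onto a proper subposet still permuted by s without fixed points; so every element
  of positive rank has at least two lower covers and, dually, every element below the top rank
  has at least two upper covers. Likewise a three-element
  level lying between two complete pairs of levels retracts onto two of its elements, and
  swapping these two while applying s elsewhere is a fixed-point-free automorphism.

  With width at most 3 every level has two or three elements (s moves every element within its
  level). For two consecutive levels the cover counts force either complete comparability or,
  when both have three elements and no element is below the whole upper level (the set of such
  elements is s-invariant, hence empty or everything), a perfect matching of incomparable pairs:
  a 6-crown. Cutting the levels at the complete pairs splits P into an ordinal sum of 6-stacks
  and single levels, and the latter are two-element antichains by the second retraction.

  Conversely, the levels of a 6-stack can be labelled by Z/3 so that elements of adjacent levels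
  are comparable iff their labels differ; adding 1 to all labels is a fixed-point-free
  automorphism, and such automorphisms of the blocks combine on an ordinal sum.
*)

theory Submission
  imports Defs
begin

section \<open>Finite posets, chains and the rank function\<close>

locale finite_poset =
  fixes P :: "'a set" and le :: "'a \<Rightarrow> 'a \<Rightarrow> bool"
  assumes finite_carrier: "finite P" and poset: "poset_on P le"
begin

lemma le_refl: "x \<in> P \<Longrightarrow> le x x"
  using poset unfolding poset_on_def by blast

lemma le_antisym: "x \<in> P \<Longrightarrow> y \<in> P \<Longrightarrow> le x y \<Longrightarrow> le y x \<Longrightarrow> x = y"
  using poset unfolding poset_on_def by blast

lemma le_trans: "x \<in> P \<Longrightarrow> y \<in> P \<Longrightarrow> z \<in> P \<Longrightarrow> le x y \<Longrightarrow> le y z \<Longrightarrow> le x z"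
  using poset unfolding poset_on_def by blast

lemma le_strict_trans: "x \<in> P \<Longrightarrow> y \<in> P \<Longrightarrow> z \<in> P \<Longrightarrow> le x y \<Longrightarrow> strict le y z \<Longrightarrow> strict le x z"
  unfolding strict_def using le_trans le_antisym by blast

lemma strict_not_ge: "x \<in> P \<Longrightarrow> y \<in> P \<Longrightarrow> strict le x y \<Longrightarrow> \<not> le y x"
  unfolding strict_def using le_antisym by blast

lemma finite_poset_subset:
  assumes "Q \<subseteq> P"
  shows "finite_poset Q le"
proof
  show "finite Q" using assms finite_carrier by (rule finite_subset)
  show "poset_on Q le" using assms poset unfolding poset_on_def by blast
qed

lemma finite_poset_converse: "finite_poset P (\<lambda>x y. le y x)"
proof
  show "finite P" by (rule finite_carrier)
  show "poset_on P (\<lambda>x y. le y x)" using poset unfolding poset_on_def by blast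
qed

end

text \<open>Not a simp rule (nor are retract_of_converse and automorphic_converse): by higher-order
  unification its left-hand side also matches its right-hand side, so simp would not terminate.\<close>

lemma strict_converse: "strict (\<lambda>x y. le y x) x y = strict le y x"
  unfolding strict_def by auto

definition chain_ending_at :: "'a set \<Rightarrow> ('a \<Rightarrow> 'a \<Rightarrow> bool) \<Rightarrow> 'a \<Rightarrow> 'a list \<Rightarrow> bool" where
  "chain_ending_at P le p xs \<longleftrightarrow> xs \<noteq> [] \<and> set xs \<subseteq> P \<and> sorted_wrt (strict le) xs \<and> last xs = p"

lemma rank_in_chain_ending_at:
  "rank_in P le p = Max {length xs - 1 | xs. chain_ending_at P le p xs}"
  unfolding rank_in_def chain_ending_at_def ..

lemma sorted_wrt_strict_distinct: "sorted_wrt (strict le) xs \<Longrightarrow> distinct xs"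
  by (induction xs) (auto simp: strict_def)

lemma sorted_wrt_total: "sorted_wrt R xs \<Longrightarrow> x \<in> set xs \<Longrightarrow> y \<in> set xs \<Longrightarrow> x = y \<or> R x y \<or> R y x"
  by (induction xs) auto

lemma sorted_wrt_last: "sorted_wrt R xs \<Longrightarrow> x \<in> set xs \<Longrightarrow> x = last xs \<or> R x (last xs)"
  by (induction xs) auto

lemma chain_ending_at_length:
  assumes "chain_ending_at P le p xs"
  shows "length xs = card (set xs)"
  using assms sorted_wrt_strict_distinct distinct_card
  unfolding chain_ending_at_def by metis

lemma chain_ending_at_snoc:
  assumes "chain_ending_at P le p xs" "q \<in> P" "\<forall>x\<in>set xs. strict le x q"
  shows "chain_ending_at P le q (xs @ [q])"
  using assms unfolding chain_ending_at_def by (auto simp: sorted_wrt_append)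

lemma finite_chain_lengths:
  assumes "finite P"
  shows "finite {length xs - 1 | xs. chain_ending_at P le p xs}"
proof (rule finite_subset)
  show "{length xs - 1 | xs. chain_ending_at P le p xs} \<subseteq> {0..card P}"
  proof
    fix k assume "k \<in> {length xs - 1 | xs. chain_ending_at P le p xs}"
    then obtain xs where xs: "k = length xs - 1" "chain_ending_at P le p xs" by blast
    have "card (set xs) \<le> card P"
      using xs(2) assms by (intro card_mono) (auto simp: chain_ending_at_def)
    then show "k \<in> {0..card P}" using xs chain_ending_at_length by fastforce
  qed
qed simp

lemma rank_in_ge:
  assumes "finite P" "chain_ending_at P le p xs"
  shows "length xs - 1 \<le> rank_in P le p"
  unfolding rank_in_chain_ending_at
  using finite_chain_lengths[OF assms(1)] assms(2) by (intro Max_ge) blast+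

lemma rank_in_witness:
  assumes "finite P" "p \<in> P"
  obtains xs where "chain_ending_at P le p xs" "length xs = rank_in P le p + 1"
proof -
  let ?S = "{length xs - 1 | xs. chain_ending_at P le p xs}"
  have "chain_ending_at P le p [p]" using assms(2) by (simp add: chain_ending_at_def)
  then have "?S \<noteq> {}" by blast
  then have "Max ?S \<in> ?S" using finite_chain_lengths[OF assms(1)] by (rule Max_in[rotated])
  then obtain xs where "rank_in P le p = length xs - 1" "chain_ending_at P le p xs"
    unfolding rank_in_chain_ending_at by auto
  then show thesis using that by (simp add: chain_ending_at_def)
qed

context finite_poset
begin

lemma chain_ending_at_chain:
  assumes "chain_ending_at P le p xs"
  shows "chain_in P le (set xs)" and "\<forall>x\<in>set xs. le x p" and "p \<in> set xs"
proof -
  have total: "x = y \<or> strict le x y \<or> strict le y x" if "x \<in> set xs" "y \<in> set xs" for x y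
    using sorted_wrt_total assms that unfolding chain_ending_at_def by metis
  have last: "x = p \<or> strict le x p" if "x \<in> set xs" for x
    using sorted_wrt_last assms that unfolding chain_ending_at_def by metis
  show "chain_in P le (set xs)"
    using total le_refl assms unfolding chain_in_def chain_ending_at_def strict_def by blast
  show "\<forall>x\<in>set xs. le x p"
    using last le_refl assms unfolding chain_ending_at_def strict_def by blast
  show "p \<in> set xs" using assms unfolding chain_ending_at_def by auto
qed

lemma rank_in_witness_chain:
  assumes "p \<in> P"
  obtains W where "chain_in P le W" "p \<in> W" "\<forall>x\<in>W. le x p" "card W = rank_in P le p + 1"
proof -
  obtain xs where "chain_ending_at P le p xs" "length xs = rank_in P le p + 1"
    using rank_in_witness[OF finite_carrier assms] .
  then show thesis
    using that chain_ending_at_chain chain_ending_at_length by metis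
qed

lemma rank_in_strict_mono:
  assumes x: "x \<in> P" and y: "y \<in> P" and xy: "strict le x y"
  shows "rank_in P le x < rank_in P le y"
proof -
  obtain xs where xs: "chain_ending_at P le x xs" "length xs = rank_in P le x + 1"
    using rank_in_witness[OF finite_carrier x] .
  have "\<forall>z\<in>set xs. strict le z y"
    using chain_ending_at_chain(2)[OF xs(1)] xs(1) x y xy le_strict_trans
    unfolding chain_ending_at_def by blast
  then have "chain_ending_at P le y (xs @ [y])"
    using chain_ending_at_snoc[OF xs(1) y] by blast
  from rank_in_ge[OF finite_carrier this] xs(2) show ?thesis by simp
qed

lemma chain_in_subset: "chain_in P le C \<Longrightarrow> C \<subseteq> P"
  unfolding chain_in_def by blast

lemma chain_in_finite: "chain_in P le C \<Longrightarrow> finite C"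
  using chain_in_subset finite_carrier finite_subset by blast

lemma chain_in_total: "chain_in P le C \<Longrightarrow> x \<in> C \<Longrightarrow> y \<in> C \<Longrightarrow> le x y \<or> le y x"
  unfolding chain_in_def by blast

lemma maxchain_in_chain: "maxchain_in P le C \<Longrightarrow> chain_in P le C"
  unfolding maxchain_in_def by blast

lemma chain_in_extends_to_maxchain:
  assumes "chain_in P le C"
  obtains D where "maxchain_in P le D" "C \<subseteq> D"
proof -
  let ?F = "{D. chain_in P le D \<and> C \<subseteq> D}"
  have "?F \<subseteq> Pow P" unfolding chain_in_def by blast
  then have fin: "finite ?F" by (rule finite_subset) (simp add: finite_carrier)
  have "?F \<noteq> {}" using assms by blast
  then obtain D where D: "D \<in> ?F" "\<forall>E\<in>?F. D \<subseteq> E \<longrightarrow> D = E"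
    using finite_has_maximal[OF fin] by blast
  have "maxchain_in P le D" unfolding maxchain_in_def
  proof (intro conjI allI impI)
    show "chain_in P le D" using D by blast
    fix E assume "chain_in P le E \<and> D \<subseteq> E"
    then show "E = D" using D by blast
  qed
  then show thesis using that D by blast
qed

lemma maxchain_in_absorbs:
  assumes "maxchain_in P le C" "z \<in> P" "\<forall>c\<in>C. le c z \<or> le z c"
  shows "z \<in> C"
proof -
  have "chain_in P le (insert z C)"
    using assms le_refl chain_in_subset[OF maxchain_in_chain] chain_in_total[OF maxchain_in_chain]
    unfolding chain_in_def by blast
  then show ?thesis using assms(1) unfolding maxchain_in_def by blast
qed

lemma chain_in_has_least:
  assumes "chain_in P le C" "C \<noteq> {}"
  obtains q where "q \<in> C" "\<forall>x\<in>C. le q x"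
proof -
  have "finite C" using chain_in_finite[OF assms(1)] .
  then have "\<exists>q\<in>C. \<forall>x\<in>C. le q x"
    using assms(2,1)
  proof (induction C rule: finite_ne_induct)
    case (singleton x)
    then show ?case using le_refl unfolding chain_in_def by auto
  next
    case (insert a C)
    have ch: "chain_in P le C" using insert.prems unfolding chain_in_def by blast
    then obtain q where q: "q \<in> C" "\<forall>x\<in>C. le q x" using insert.IH by blast
    have aP: "a \<in> P" and CP: "C \<subseteq> P" using insert.prems unfolding chain_in_def by auto
    show ?case
    proof (cases "le a q")
      case True
      then have "\<forall>x\<in>insert a C. le a x"
        using q aP CP le_refl le_trans by blast
      then show ?thesis by blast
    next
      case False
      then have "le q a" using chain_in_total[OF insert.prems] q by blast
      then show ?thesis using q by blast
    qed
  qed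
  then show thesis using that by blast
qed

lemma card_chain_below:
  assumes C: "chain_in P le C" and p: "p \<in> P" and below: "\<forall>x\<in>C. le x p"
  shows "card C \<le> rank_in P le p + 1"
proof -
  have CP: "C \<subseteq> P" using chain_in_subset[OF C] .
  have "inj_on (rank_in P le) C"
  proof (rule inj_onI)
    fix x y assume xy: "x \<in> C" "y \<in> C" "rank_in P le x = rank_in P le y"
    show "x = y"
    proof (rule ccontr)
      assume "x \<noteq> y"
      then have "strict le x y \<or> strict le y x"
        using chain_in_total[OF C] xy by (auto simp: strict_def)
      then show False using rank_in_strict_mono xy CP by (metis less_irrefl subsetD)
    qed
  qed
  moreover have "rank_in P le ` C \<subseteq> {0..rank_in P le p}"
  proof
    fix k assume "k \<in> rank_in P le ` C"
    then obtain x where x: "x \<in> C" "k = rank_in P le x" by blast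
    have "x = p \<or> strict le x p" using below x by (auto simp: strict_def)
    then have "rank_in P le x \<le> rank_in P le p"
      using rank_in_strict_mono[of x p] x CP p by (metis less_imp_le order_refl subsetD)
    then show "k \<in> {0..rank_in P le p}" using x by simp
  qed
  then have "card (rank_in P le ` C) \<le> rank_in P le p + 1"
    using card_mono[OF finite_atLeastAtMost[of 0 "rank_in P le p"]] by simp
  ultimately show ?thesis by (simp add: card_image)
qed

end

definition order_automorphism :: "'a set \<Rightarrow> ('a \<Rightarrow> 'a \<Rightarrow> bool) \<Rightarrow> ('a \<Rightarrow> 'a) \<Rightarrow> bool" where
  "order_automorphism P le s \<longleftrightarrow> bij_betw s P P \<and> (\<forall>x\<in>P. \<forall>y\<in>P. le x y \<longleftrightarrow> le (s x) (s y))"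

lemma automorphic_iff:
  "automorphic P le \<longleftrightarrow> (\<exists>s. order_automorphism P le s \<and> (\<forall>x\<in>P. s x \<noteq> x))"
  unfolding automorphic_def order_automorphism_def by blast

lemma order_automorphismD:
  assumes "order_automorphism P le s"
  shows "x \<in> P \<Longrightarrow> s x \<in> P"
    and "x \<in> P \<Longrightarrow> y \<in> P \<Longrightarrow> le (s x) (s y) \<longleftrightarrow> le x y"
    and "x \<in> P \<Longrightarrow> y \<in> P \<Longrightarrow> strict le (s x) (s y) \<longleftrightarrow> strict le x y"
    and "inj_on s P" and "s ` P = P"
proof -
  have bij: "bij_betw s P P" and iso: "\<forall>x\<in>P. \<forall>y\<in>P. le x y \<longleftrightarrow> le (s x) (s y)"
    using assms unfolding order_automorphism_def by blast+
  show "inj_on s P" and "s ` P = P" using bij unfolding bij_betw_def by blast+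
  show "x \<in> P \<Longrightarrow> s x \<in> P" using bij_betwE[OF bij] by blast
  show "x \<in> P \<Longrightarrow> y \<in> P \<Longrightarrow> le (s x) (s y) \<longleftrightarrow> le x y" using iso by blast
  show "x \<in> P \<Longrightarrow> y \<in> P \<Longrightarrow> strict le (s x) (s y) \<longleftrightarrow> strict le x y"
    using iso \<open>inj_on s P\<close> unfolding strict_def inj_on_def by blast
qed

lemma order_automorphism_inv:
  assumes s: "order_automorphism P le s"
  shows "order_automorphism P le (inv_into P s)"
proof -
  have bij: "bij_betw (inv_into P s) P P"
    using s bij_betw_inv_into unfolding order_automorphism_def by blast
  have "le (inv_into P s x) (inv_into P s y) \<longleftrightarrow> le x y" if "x \<in> P" "y \<in> P" for x y
  proof -
    have "inv_into P s x \<in> P" "inv_into P s y \<in> P" using bij_betwE[OF bij] that by blast+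
    moreover have "s (inv_into P s x) = x" "s (inv_into P s y) = y"
      using that order_automorphismD(5)[OF s] by (simp_all add: f_inv_into_f)
    ultimately show ?thesis using order_automorphismD(2)[OF s] by metis
  qed
  then show ?thesis using bij unfolding order_automorphism_def by blast
qed

lemma rank_in_automorphism_ge:
  assumes fin: "finite P" and s: "order_automorphism P le s" and x: "x \<in> P"
  shows "rank_in P le x \<le> rank_in P le (s x)"
proof -
  obtain xs where xs: "chain_ending_at P le x xs" "length xs = rank_in P le x + 1"
    using rank_in_witness[OF fin x] .
  have xsP: "set xs \<subseteq> P" using xs(1) unfolding chain_ending_at_def by blast
  have "sorted_wrt (strict le) xs" using xs(1) unfolding chain_ending_at_def by blast
  then have "sorted_wrt (\<lambda>a b. strict le (s a) (s b)) xs"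
    using order_automorphismD(3)[OF s] xsP by (elim sorted_wrt_mono_rel[rotated]) blast
  then have "chain_ending_at P le (s x) (map s xs)"
    using xs(1) xsP order_automorphismD(1)[OF s] unfolding chain_ending_at_def
    by (auto simp: sorted_wrt_map last_map)
  from rank_in_ge[OF fin this] xs(2) show ?thesis by simp
qed

lemma rank_in_automorphism:
  assumes fin: "finite P" and s: "order_automorphism P le s" and x: "x \<in> P"
  shows "rank_in P le (s x) = rank_in P le x"
proof (rule antisym)
  have "rank_in P le (s x) \<le> rank_in P le (inv_into P s (s x))"
    using rank_in_automorphism_ge[OF fin order_automorphism_inv[OF s]]
      order_automorphismD(1)[OF s x] .
  then show "rank_in P le (s x) \<le> rank_in P le x"
    unfolding inv_into_f_f[OF order_automorphismD(4)[OF s] x] .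
qed (rule rank_in_automorphism_ge[OF assms])

lemma order_automorphism_Diff:
  assumes fin: "finite P" and s: "order_automorphism P le s"
    and S: "S \<subseteq> P" "\<forall>x\<in>S. s x \<in> S"
  shows "order_automorphism (P - S) le s"
proof -
  have inj: "inj_on s P" and onto: "s ` P = P" using order_automorphismD[OF s] by blast+
  have "s ` S = S"
    using endo_inj_surj[of S s] finite_subset[OF S(1) fin] S inj_on_subset[OF inj] by blast
  then have "s ` (P - S) = P - S" using inj_on_image_set_diff[OF inj _ S(1)] onto by simp
  moreover have "inj_on s (P - S)" using inj_on_subset[OF inj] by blast
  ultimately show ?thesis using s unfolding order_automorphism_def bij_betw_def by blast
qed

lemma retract_of_converse: "retract_of Q P (\<lambda>x y. le y x) \<longleftrightarrow> retract_of Q P le"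
  unfolding retract_of_def by blast

lemma automorphic_converse: "automorphic Q (\<lambda>x y. le y x) \<longleftrightarrow> automorphic Q le"
  unfolding automorphic_def by blast

lemma minimal_automorphic_converse:
  "minimal_automorphic P (\<lambda>x y. le y x) \<longleftrightarrow> minimal_automorphic P le"
  using retract_of_converse[of _ P le] automorphic_converse[of _ le]
  unfolding minimal_automorphic_def by blast

lemma minimal_automorphicE:
  assumes "minimal_automorphic P le"
  obtains s where "order_automorphism P le s" "\<forall>x\<in>P. s x \<noteq> x"
  using assms unfolding minimal_automorphic_def automorphic_iff by blast

lemma minimal_automorphic_no_proper_retract:
  assumes "minimal_automorphic P le" "retract_of Q P le" "Q \<noteq> P"
    and "order_automorphism Q le t" "\<forall>x\<in>Q. t x \<noteq> x"
  shows False
  using assms unfolding minimal_automorphic_def automorphic_iff by blast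

section \<open>Ranked posets and gradings\<close>

text \<open>The last clause says that r increases by exactly one along covering pairs.\<close>

definition grading :: "'a set \<Rightarrow> ('a \<Rightarrow> 'a \<Rightarrow> bool) \<Rightarrow> ('a \<Rightarrow> nat) \<Rightarrow> nat \<Rightarrow> bool" where
  "grading P le r n \<longleftrightarrow>
     (\<forall>p\<in>P. r p \<le> n) \<and>
     (\<forall>x\<in>P. \<forall>y\<in>P. strict le x y \<longrightarrow> r x < r y) \<and>
     (\<forall>p\<in>P. 0 < r p \<longrightarrow> (\<exists>q\<in>P. strict le q p \<and> r q + 1 = r p)) \<and>
     (\<forall>p\<in>P. r p < n \<longrightarrow> (\<exists>q\<in>P. strict le p q \<and> r q = r p + 1)) \<and>
     (\<forall>x\<in>P. \<forall>y\<in>P. strict le x y \<and> r x + 1 < r y \<longrightarrow> (\<exists>z\<in>P. strict le x z \<and> strict le z y))"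

locale ranked_poset = finite_poset +
  fixes n :: nat
  assumes ranked: "ranked_of_rank P le n"
begin

lemma chain_card_le: "chain_in P le C \<Longrightarrow> card C \<le> n + 1"
proof -
  assume "chain_in P le C"
  then obtain D where D: "maxchain_in P le D" "C \<subseteq> D" by (rule chain_in_extends_to_maxchain)
  have "card C \<le> card D"
    using D chain_in_finite[OF maxchain_in_chain] by (meson card_mono)
  then show ?thesis using ranked D(1) unfolding ranked_of_rank_def by simp
qed

lemma card_below_in_maxchain:
  assumes D: "maxchain_in P le D" and c: "c \<in> D"
  shows "card {x\<in>D. le x c} = rank_in P le c + 1"
proof -
  have chD: "chain_in P le D" using maxchain_in_chain[OF D] .
  have DP: "D \<subseteq> P" and finD: "finite D" using chain_in_subset[OF chD] chain_in_finite[OF chD] .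
  have cP: "c \<in> P" using c DP by blast
  let ?A = "{x\<in>D. le x c}" and ?U = "{x\<in>D. \<not> le x c}"
  have "card ?A \<le> rank_in P le c + 1"
    using chD cP by (intro card_chain_below) (auto simp: chain_in_def)
  obtain W where W: "chain_in P le W" "c \<in> W" "\<forall>x\<in>W. le x c" "card W = rank_in P le c + 1"
    using rank_in_witness_chain[OF cP] .
  have WP: "W \<subseteq> P" and finW: "finite W" using chain_in_subset[OF W(1)] chain_in_finite[OF W(1)] .
  \<comment> \<open>Replacing the part of D below c by a longest chain below c gives another chain.\<close>
  have "chain_in P le (W \<union> ?U)" unfolding chain_in_def
  proof (intro conjI ballI)
    show "W \<union> ?U \<subseteq> P" using WP DP by blast
    have "le w u" if "w \<in> W" "u \<in> ?U" for w u
      using chain_in_total[OF chD c, of u] that W(3) WP DP cP le_trans by blast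
    then show "le x y \<or> le y x" if "x \<in> W \<union> ?U" "y \<in> W \<union> ?U" for x y
      using that chain_in_total[OF W(1)] chain_in_total[OF chD] by blast
  qed
  then have "card (W \<union> ?U) \<le> n + 1" by (rule chain_card_le)
  moreover have "card (W \<union> ?U) = card W + card ?U"
    using W(3) finW finD by (intro card_Un_disjoint) auto
  moreover have "card D = n + 1" using ranked D unfolding ranked_of_rank_def by blast
  moreover have "card D = card ?A + card ?U"
    using finD by (subst card_Un_disjoint[symmetric]) (auto intro: arg_cong[where f = card])
  ultimately show ?thesis using \<open>card ?A \<le> rank_in P le c + 1\<close> W(4) by linarith
qed

lemma rank_in_le: "p \<in> P \<Longrightarrow> rank_in P le p \<le> n"
  using rank_in_witness_chain chain_card_le by (metis add_le_cancel_right)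

lemma rank_in_lower_cover:
  assumes p: "p \<in> P" and pos: "0 < rank_in P le p"
  shows "\<exists>q\<in>P. strict le q p \<and> rank_in P le q + 1 = rank_in P le p"
proof -
  obtain xs where xs: "chain_ending_at P le p xs" "length xs = rank_in P le p + 1"
    using rank_in_witness[OF finite_carrier p] .
  define ys where "ys = butlast xs"
  have xs_ys: "xs = ys @ [p]"
    using xs(1) unfolding ys_def chain_ending_at_def by (metis append_butlast_last_id)
  have ys: "ys \<noteq> []" using xs(2) pos xs_ys by auto
  have ys_sorted: "sorted_wrt (strict le) ys" and below: "\<forall>y\<in>set ys. strict le y p"
    using xs(1) unfolding xs_ys chain_ending_at_def by (auto simp: sorted_wrt_append)
  define q where "q = last ys"
  have q: "q \<in> set ys" "q \<in> P" using ys xs(1) unfolding q_def xs_ys chain_ending_at_def by auto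
  have "chain_ending_at P le q ys"
    using ys ys_sorted xs(1) unfolding q_def xs_ys chain_ending_at_def by auto
  then have "length ys - 1 \<le> rank_in P le q" by (rule rank_in_ge[OF finite_carrier])
  moreover have "rank_in P le q < rank_in P le p" using rank_in_strict_mono q below p by blast
  ultimately show ?thesis using xs(2) xs_ys q below by fastforce
qed

lemma rank_in_upper_cover:
  assumes p: "p \<in> P" and lt: "rank_in P le p < n"
  shows "\<exists>q\<in>P. strict le p q \<and> rank_in P le q = rank_in P le p + 1"
proof -
  obtain W where W: "chain_in P le W" "p \<in> W" "\<forall>x\<in>W. le x p" "card W = rank_in P le p + 1"
    using rank_in_witness_chain[OF p] .
  obtain D where D: "maxchain_in P le D" "W \<subseteq> D" using chain_in_extends_to_maxchain[OF W(1)] .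
  have chD: "chain_in P le D" using maxchain_in_chain[OF D(1)] .
  have DP: "D \<subseteq> P" and finD: "finite D" using chain_in_subset[OF chD] chain_in_finite[OF chD] .
  have pD: "p \<in> D" using D W by blast
  let ?A = "{x\<in>D. le x p}" and ?U = "{x\<in>D. \<not> le x p}"
  have cA: "card ?A = rank_in P le p + 1" using card_below_in_maxchain[OF D(1) pD] .
  have "card D = n + 1" using ranked D unfolding ranked_of_rank_def by blast
  have "?U \<noteq> {}"
  proof
    assume "?U = {}"
    then have "D = ?A" by blast
    then show False using cA \<open>card D = n + 1\<close> lt by simp
  qed
  moreover have "chain_in P le ?U" using chD unfolding chain_in_def by blast
  ultimately obtain y where y: "y \<in> ?U" "\<forall>x\<in>?U. le y x" using chain_in_has_least by blast
  have yP: "y \<in> P" using y DP by blast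
  have py: "le p y" using chain_in_total[OF chD pD] y by blast
  have "{x\<in>D. le x y} = insert y ?A"
  proof (intro set_eqI iffI)
    fix x assume x: "x \<in> {x\<in>D. le x y}"
    show "x \<in> insert y ?A"
    proof (cases "le x p")
      case False
      then have "le y x" using y x by blast
      then show ?thesis using le_antisym x DP yP by blast
    qed (use x in blast)
  next
    fix x assume "x \<in> insert y ?A"
    then show "x \<in> {x\<in>D. le x y}" using le_refl[OF yP] y le_trans[of x p y] py DP p by blast
  qed
  moreover have "y \<notin> ?A" using y by blast
  ultimately have "card {x\<in>D. le x y} = rank_in P le p + 2" using cA finD by simp
  then have "rank_in P le y = rank_in P le p + 1"
    using card_below_in_maxchain[OF D(1)] y by simp
  moreover have "p \<noteq> y" using y le_refl p by blast
  ultimately show ?thesis using yP py by (auto simp: strict_def)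
qed

lemma rank_in_gap:
  assumes x: "x \<in> P" and y: "y \<in> P" and xy: "strict le x y"
    and gap: "rank_in P le x + 1 < rank_in P le y"
  shows "\<exists>z\<in>P. strict le x z \<and> strict le z y"
proof -
  obtain W where W: "chain_in P le W" "x \<in> W" "\<forall>w\<in>W. le w x" "card W = rank_in P le x + 1"
    using rank_in_witness_chain[OF x] .
  have WP: "W \<subseteq> P" using chain_in_subset[OF W(1)] .
  have "chain_in P le (insert y W)"
    using W(1,3) WP x y xy le_trans le_refl unfolding chain_in_def strict_def by blast
  then obtain D where D: "maxchain_in P le D" "insert y W \<subseteq> D"
    by (rule chain_in_extends_to_maxchain)
  have chD: "chain_in P le D" using maxchain_in_chain[OF D(1)] .
  have DP: "D \<subseteq> P" and finD: "finite D" using chain_in_subset[OF chD] chain_in_finite[OF chD] .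
  have xD: "x \<in> D" and yD: "y \<in> D" using D W by auto
  let ?Ax = "{z\<in>D. le z x}" and ?Ay = "{z\<in>D. le z y}"
  have sub: "?Ax \<subseteq> ?Ay" using le_trans xy x y DP unfolding strict_def by blast
  have "card (?Ay - ?Ax) = rank_in P le y - rank_in P le x"
    using card_Diff_subset[OF _ sub] finD card_below_in_maxchain[OF D(1)] xD yD by simp
  then have two: "2 \<le> card (?Ay - ?Ax)" using gap by linarith
  have "\<not> ?Ay - ?Ax \<subseteq> {y}"
  proof
    assume "?Ay - ?Ax \<subseteq> {y}"
    then have "card (?Ay - ?Ax) \<le> 1" using card_mono[of "{y}"] by fastforce
    then show False using two by simp
  qed
  then obtain z where z: "z \<in> D" "le z y" "\<not> le z x" "z \<noteq> y" by blast
  have "le x z" using chain_in_total[OF chD xD z(1)] z(3) by blast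
  then show ?thesis using z DP le_refl x unfolding strict_def by blast
qed

lemma grading_rank_in: "grading P le (rank_in P le) n"
  unfolding grading_def
  using rank_in_le rank_in_strict_mono rank_in_lower_cover rank_in_upper_cover rank_in_gap
  by blast

end

lemma finite_has_max_wrt:
  fixes f :: "'a \<Rightarrow> nat"
  assumes "finite A" "A \<noteq> {}"
  obtains x where "x \<in> A" "\<forall>y\<in>A. f y \<le> f x"
proof -
  have "Max (f ` A) \<in> f ` A" using assms by simp
  then obtain x where "x \<in> A" "f x = Max (f ` A)" by auto
  then show thesis using that assms by simp
qed

lemma finite_has_min_wrt:
  fixes f :: "'a \<Rightarrow> nat"
  assumes "finite A" "A \<noteq> {}"
  obtains x where "x \<in> A" "\<forall>y\<in>A. f x \<le> f y"
proof -
  have "Min (f ` A) \<in> f ` A" using assms by simp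
  then obtain x where "x \<in> A" "f x = Min (f ` A)" by auto
  then show thesis using that assms by simp
qed

locale graded_poset = finite_poset +
  fixes r :: "'a \<Rightarrow> nat" and n :: nat
  assumes grading: "grading P le r n"
begin

lemma rank_le: "p \<in> P \<Longrightarrow> r p \<le> n"
  and rank_strict_mono: "x \<in> P \<Longrightarrow> y \<in> P \<Longrightarrow> strict le x y \<Longrightarrow> r x < r y"
  and lower_cover: "p \<in> P \<Longrightarrow> 0 < r p \<Longrightarrow> \<exists>q\<in>P. strict le q p \<and> r q + 1 = r p"
  and upper_cover: "p \<in> P \<Longrightarrow> r p < n \<Longrightarrow> \<exists>q\<in>P. strict le p q \<and> r q = r p + 1"
  and strictly_between:
    "x \<in> P \<Longrightarrow> y \<in> P \<Longrightarrow> strict le x y \<Longrightarrow> r x + 1 < r y \<Longrightarrow> \<exists>z\<in>P. strict le x z \<and> strict le z y"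
  using grading unfolding grading_def by blast+

lemma rank_mono: "x \<in> P \<Longrightarrow> y \<in> P \<Longrightarrow> le x y \<Longrightarrow> r x \<le> r y"
  using rank_strict_mono[of x y] unfolding strict_def by fastforce

lemma same_rank_le_imp_eq: "x \<in> P \<Longrightarrow> y \<in> P \<Longrightarrow> r x = r y \<Longrightarrow> le x y \<Longrightarrow> x = y"
  using rank_strict_mono[of x y] unfolding strict_def by fastforce

lemma chain_in_le_of_rank_le:
  assumes C: "chain_in P le C" and cd: "c \<in> C" "d \<in> C" and "r c \<le> r d"
  shows "le c d"
proof (rule ccontr)
  assume "\<not> le c d"
  then have "strict le d c" using chain_in_total[OF C cd] unfolding strict_def by blast
  then show False using rank_strict_mono chain_in_subset[OF C] cd \<open>r c \<le> r d\<close> by (meson leD subsetD)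
qed

lemma graded_poset_converse: "graded_poset P (\<lambda>x y. le y x) (\<lambda>x. n - r x) n"
proof -
  note conv = strict_converse[of le]
  have "grading P (\<lambda>x y. le y x) (\<lambda>x. n - r x) n"
    unfolding grading_def
  proof (intro conjI ballI impI)
    fix x y assume "x \<in> P" "y \<in> P" "strict (\<lambda>x y. le y x) x y"
    then have "r y < r x" "r x \<le> n" using rank_strict_mono rank_le conv by blast+
    then show "n - r x < n - r y" by linarith
  next
    fix p assume p: "p \<in> P" "0 < n - r p"
    then have "r p < n" by linarith
    then obtain q where q: "q \<in> P" "strict le p q" "r q = r p + 1"
      using upper_cover p(1) by blast
    moreover have "n - r q + 1 = n - r p" using q(3) rank_le[OF q(1)] by linarith
    ultimately show "\<exists>q\<in>P. strict (\<lambda>x y. le y x) q p \<and> n - r q + 1 = n - r p"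
      using conv by blast
  next
    fix p assume p: "p \<in> P" "n - r p < n"
    then have "0 < r p" by linarith
    then obtain q where q: "q \<in> P" "strict le q p" "r q + 1 = r p"
      using lower_cover p(1) by blast
    moreover have "n - r q = n - r p + 1" using q(3) rank_le[OF p(1)] by linarith
    ultimately show "\<exists>q\<in>P. strict (\<lambda>x y. le y x) p q \<and> n - r q = n - r p + 1"
      using conv by blast
  next
    fix x y
    assume xy: "x \<in> P" "y \<in> P" "strict (\<lambda>x y. le y x) x y \<and> n - r x + 1 < n - r y"
    then have "r y + 1 < r x" using rank_le[of x] by linarith
    then show "\<exists>z\<in>P. strict (\<lambda>x y. le y x) x z \<and> strict (\<lambda>x y. le y x) z y"
      using strictly_between[of y x] xy conv by blast
  qed simp
  with finite_poset_converse show ?thesis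
    unfolding graded_poset_def graded_poset_axioms_def by blast
qed

lemma step_down:
  "x \<in> P \<Longrightarrow> y \<in> P \<Longrightarrow> strict le x y \<Longrightarrow> \<exists>z\<in>P. r z + 1 = r y \<and> le x z \<and> strict le z y"
proof (induction "r y - r x" arbitrary: x rule: less_induct)
  case less
  show ?case
  proof (cases "r x + 1 < r y")
    case False
    then have "r x + 1 = r y" using rank_strict_mono less.prems by fastforce
    then show ?thesis using less.prems le_refl by blast
  next
    case True
    then obtain z where z: "z \<in> P" "strict le x z" "strict le z y"
      using strictly_between less.prems by blast
    have "r y - r z < r y - r x"
      using rank_strict_mono z less.prems by (meson diff_less_mono2 less_trans)
    then obtain w where w: "w \<in> P" "r w + 1 = r y" "le z w" "strict le w y"
      using less.hyps z less.prems by blast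
    then show ?thesis using le_trans[of x z w] z less.prems unfolding strict_def by blast
  qed
qed

lemma below_at_rank: "p \<in> P \<Longrightarrow> j \<le> r p \<Longrightarrow> \<exists>z\<in>P. r z = j \<and> le z p"
proof (induction "r p - j" arbitrary: p)
  case 0
  then show ?case using le_refl by auto
next
  case (Suc m)
  then obtain q where q: "q \<in> P" "strict le q p" "r q + 1 = r p" using lower_cover by fastforce
  moreover have "m = r q - j" "j \<le> r q" using q(3) Suc.hyps(2) by linarith+
  ultimately obtain z where "z \<in> P" "r z = j" "le z q" using Suc.hyps(1) by blast
  then show ?case using le_trans[of z q p] q Suc.prems unfolding strict_def by blast
qed

lemma above_at_rank:
  assumes "p \<in> P" "r p \<le> j" "j \<le> n"
  shows "\<exists>z\<in>P. r z = j \<and> le p z"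
proof -
  interpret dual: graded_poset P "\<lambda>x y. le y x" "\<lambda>x. n - r x" n by (rule graded_poset_converse)
  obtain z where z: "z \<in> P" "n - r z = n - j" "le p z"
    using dual.below_at_rank[of p "n - j"] assms(1,2) by (meson diff_le_mono2)
  moreover have "r z = j" using z(2) rank_le[OF z(1)] assms(3) by linarith
  ultimately show ?thesis by blast
qed

lemma inj_on_rank_chain:
  assumes C: "chain_in P le C"
  shows "inj_on r C"
proof (rule inj_onI)
  fix x y assume xy: "x \<in> C" "y \<in> C" "r x = r y"
  then have "le x y" "le y x" using chain_in_le_of_rank_le[OF C] by simp_all
  then show "x = y" using le_antisym xy chain_in_subset[OF C] by blast
qed

lemma rank_in_eq:
  assumes p: "p \<in> P"
  shows "rank_in P le p = r p"
proof (rule antisym)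
  obtain W where W: "chain_in P le W" "p \<in> W" "\<forall>x\<in>W. le x p" "card W = rank_in P le p + 1"
    using rank_in_witness_chain[OF p] .
  have "inj_on r W" using inj_on_rank_chain[OF W(1)] .
  moreover have "r ` W \<subseteq> {0..r p}" using rank_mono W chain_in_subset[OF W(1)] p by fastforce
  ultimately have "card W \<le> card {0..r p}"
    by (metis card_image card_mono finite_atLeastAtMost)
  then show "rank_in P le p \<le> r p" using W(4) by simp
next
  have "\<exists>xs. chain_ending_at P le p xs \<and> length xs = r p + 1" if "p \<in> P" for p
    using that
  proof (induction "r p" arbitrary: p)
    case 0
    then show ?case by (intro exI[of _ "[p]"]) (simp add: chain_ending_at_def)
  next
    case (Suc k)
    obtain q where q: "q \<in> P" "strict le q p" "r q + 1 = r p"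
      using lower_cover Suc by fastforce
    then obtain xs where xs: "chain_ending_at P le q xs" "length xs = r q + 1"
      using Suc.hyps(1)[of q] Suc.hyps(2) by fastforce
    have "\<forall>x\<in>set xs. strict le x p"
      using chain_ending_at_chain(2)[OF xs(1)] xs(1) q Suc.prems le_strict_trans
      unfolding chain_ending_at_def by blast
    then show ?case
      using chain_ending_at_snoc[OF xs(1) Suc.prems] xs(2) q(3) by (intro exI[of _ "xs @ [p]"]) simp
  qed
  then obtain xs where "chain_ending_at P le p xs" "length xs = r p + 1" using p by blast
  then show "r p \<le> rank_in P le p" using rank_in_ge[OF finite_carrier] by fastforce
qed

lemma maxchain_least_rank:
  assumes C: "maxchain_in P le C" and c: "c \<in> C" and least: "\<forall>d\<in>C. r c \<le> r d"
  shows "r c = 0"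
proof (rule ccontr)
  assume "r c \<noteq> 0"
  have chC: "chain_in P le C" using maxchain_in_chain[OF C] .
  have cP: "c \<in> P" using c chain_in_subset[OF chC] by blast
  obtain q where q: "q \<in> P" "strict le q c" "r q + 1 = r c"
    using lower_cover[OF cP] \<open>r c \<noteq> 0\<close> by blast
  have "le q d" if "d \<in> C" for d
    using chain_in_le_of_rank_le[OF chC c that] least that q le_trans[of q c d] cP
      chain_in_subset[OF chC] unfolding strict_def by blast
  then have "q \<in> C" using maxchain_in_absorbs[OF C q(1)] by blast
  then show False using least q(3) by fastforce
qed

lemma maxchain_in_converse: "maxchain_in P (\<lambda>x y. le y x) C \<longleftrightarrow> maxchain_in P le C"
  unfolding maxchain_in_def chain_in_def by blast

lemma maxchain_greatest_rank:
  assumes C: "maxchain_in P le C" and c: "c \<in> C" and greatest: "\<forall>d\<in>C. r d \<le> r c"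
  shows "r c = n"
proof -
  interpret dual: graded_poset P "\<lambda>x y. le y x" "\<lambda>x. n - r x" n by (rule graded_poset_converse)
  have "n - r c = 0"
    using dual.maxchain_least_rank C c greatest maxchain_in_converse by (meson diff_le_mono2)
  then show ?thesis using rank_le c chain_in_subset[OF maxchain_in_chain[OF C]] by fastforce
qed

lemma maxchain_consecutive_ranks:
  assumes C: "maxchain_in P le C" and xy: "x \<in> C" "y \<in> C" "r x < r y"
    and no_between: "\<forall>d\<in>C. r d \<le> r x \<or> r y \<le> r d"
  shows "r y = r x + 1"
proof (rule ccontr)
  assume "r y \<noteq> r x + 1"
  then have gap: "r x + 1 < r y" using xy(3) by linarith
  have chC: "chain_in P le C" using maxchain_in_chain[OF C] .
  have CP: "C \<subseteq> P" using chain_in_subset[OF chC] .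
  have "strict le x y"
    using chain_in_le_of_rank_le[OF chC xy(1,2)] xy(3) unfolding strict_def by auto
  then obtain z where z: "z \<in> P" "strict le x z" "strict le z y"
    using strictly_between xy CP gap by blast
  have "le d z \<or> le z d" if "d \<in> C" for d
  proof (cases "r d \<le> r x")
    case True
    then show ?thesis
      using chain_in_le_of_rank_le[OF chC that xy(1)] le_trans[of d x z] z that xy CP
      unfolding strict_def by blast
  next
    case False
    then have "le y d" using chain_in_le_of_rank_le[OF chC xy(2) that] no_between that by fastforce
    then show ?thesis using le_trans[of z y d] z that xy CP unfolding strict_def by blast
  qed
  then have "z \<in> C" using maxchain_in_absorbs[OF C z(1)] by blast
  moreover have "r x < r z" "r z < r y" using rank_strict_mono z xy CP by blast+
  ultimately show False using no_between by fastforce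
qed

lemma maxchain_rank_image:
  assumes C: "maxchain_in P le C" and ne: "C \<noteq> {}"
  shows "r ` C = {0..n}"
proof
  have CP: "C \<subseteq> P" and finC: "finite C"
    using chain_in_subset[OF maxchain_in_chain[OF C]] chain_in_finite[OF maxchain_in_chain[OF C]] .
  show "r ` C \<subseteq> {0..n}" using rank_le CP by auto
  obtain lo where lo: "lo \<in> C" "\<forall>d\<in>C. r lo \<le> r d"
    using finite_has_min_wrt[OF finC ne] by blast
  obtain hi where hi: "hi \<in> C" "\<forall>d\<in>C. r d \<le> r hi"
    using finite_has_max_wrt[OF finC ne] by blast
  have r_lo: "r lo = 0" and r_hi: "r hi = n"
    using maxchain_least_rank[OF C lo] maxchain_greatest_rank[OF C hi] .
  show "{0..n} \<subseteq> r ` C"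
  proof
    fix k assume k: "k \<in> {0..n}"
    show "k \<in> r ` C"
    proof (rule ccontr)
      assume nk: "k \<notin> r ` C"
      let ?lo = "{d\<in>C. r d < k}" and ?hi = "{d\<in>C. k < r d}"
      have "k \<noteq> r lo" "k \<noteq> r hi" using nk lo(1) hi(1) by blast+
      then have "lo \<in> ?lo" "hi \<in> ?hi" using lo(1) hi(1) r_lo r_hi k by auto
      then have "?lo \<noteq> {}" "?hi \<noteq> {}" by blast+
      moreover have "finite ?lo" "finite ?hi" using finC by simp_all
      ultimately obtain x where x: "x \<in> ?lo" "\<forall>d\<in>?lo. r d \<le> r x"
        using finite_has_max_wrt[of ?lo r] by blast
      obtain y where y: "y \<in> ?hi" "\<forall>d\<in>?hi. r y \<le> r d"
        using finite_has_min_wrt[of ?hi r] \<open>?hi \<noteq> {}\<close> \<open>finite ?hi\<close> by blast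
      have "\<forall>d\<in>C. r d \<le> r x \<or> r y \<le> r d"
      proof
        fix d assume d: "d \<in> C"
        then have "r d \<noteq> k" using nk by blast
        then have "r d < k \<or> k < r d" by linarith
        then show "r d \<le> r x \<or> r y \<le> r d" using x(2) y(2) d by blast
      qed
      moreover have "x \<in> C" "y \<in> C" "r x < k" "k < r y" using x(1) y(1) by simp_all
      ultimately have "r y = r x + 1" using maxchain_consecutive_ranks[OF C] by simp
      then show False using \<open>r x < k\<close> \<open>k < r y\<close> by simp
    qed
  qed
qed

lemma ranked_of_rank:
  assumes "P \<noteq> {}"
  shows "ranked_of_rank P le n"
  unfolding ranked_of_rank_def
proof (intro allI impI)
  fix C assume C: "maxchain_in P le C"
  obtain p where "p \<in> P" using assms by blast
  then have "C \<noteq> {}" using maxchain_in_absorbs[OF C] by blast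
  then show "card C = n + 1"
    using card_image[OF inj_on_rank_chain[OF maxchain_in_chain[OF C]]] maxchain_rank_image[OF C]
    by simp
qed

end

section \<open>Covers in minimal automorphic graded posets\<close>

context graded_poset
begin

lemma automorphism_preserves_rank:
  assumes "order_automorphism P le s" "x \<in> P"
  shows "r (s x) = r x"
  using rank_in_automorphism[OF finite_carrier assms] rank_in_eq assms
    order_automorphismD(1)[OF assms(1)] by metis

definition lower_covers :: "'a \<Rightarrow> 'a set" where
  "lower_covers p = {q\<in>P. strict le q p \<and> r q + 1 = r p}"

definition upper_covers :: "'a \<Rightarrow> 'a set" where
  "upper_covers p = {q\<in>P. strict le p q \<and> r q = r p + 1}"

lemma automorphism_lower_covers:
  assumes s: "order_automorphism P le s" and x: "x \<in> P"
  shows "lower_covers (s x) = s ` lower_covers x"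
proof
  show "s ` lower_covers x \<subseteq> lower_covers (s x)"
    using order_automorphismD[OF s] automorphism_preserves_rank[OF s] x
    unfolding lower_covers_def by auto
  show "lower_covers (s x) \<subseteq> s ` lower_covers x"
  proof
    fix q' assume q': "q' \<in> lower_covers (s x)"
    then obtain q where q: "q \<in> P" "q' = s q"
      using order_automorphismD(5)[OF s] unfolding lower_covers_def by blast
    then have "q \<in> lower_covers x"
      using q' order_automorphismD(3)[OF s q(1) x] automorphism_preserves_rank[OF s] x
      unfolding lower_covers_def by auto
    then show "q' \<in> s ` lower_covers x" using q by blast
  qed
qed

lemma retract_Diff_unique_lower_covers:
  assumes S: "S \<subseteq> P" "\<forall>x\<in>S. r x = k" "\<forall>x\<in>S. card (lower_covers x) = 1"
  shows "retract_of (P - S) P le"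
proof -
  define lc where "lc x = the_elem (lower_covers x)" for x
  have lc: "lower_covers x = {lc x}" if "x \<in> S" for x
    using S(3) that unfolding lc_def by (metis card_1_singletonE the_elem_eq)
  have lcP: "lc x \<in> P" "strict le (lc x) x" "r (lc x) + 1 = r x" if "x \<in> S" for x
    using lc[OF that] unfolding lower_covers_def by blast+
  have lc_unique: "q = lc x" if "x \<in> S" "q \<in> P" "strict le q x" "r q + 1 = r x" for x q
    using lc[OF that(1)] that(2-) unfolding lower_covers_def by blast
  define f where "f x = (if x \<in> S then lc x else x)" for x
  have "f x \<in> P - S" if "x \<in> P" for x
  proof (cases "x \<in> S")
    case True
    then have "r (lc x) \<noteq> k" using lcP(3) S(2) by fastforce
    then show ?thesis using True lcP(1) S(2) unfolding f_def by auto
  qed (use that in \<open>simp add: f_def\<close>)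
  moreover have "le (f x) (f y)" if x: "x \<in> P" and y: "y \<in> P" and xy: "le x y" for x y
  proof (cases "x \<in> S"; cases "y \<in> S")
    assume "x \<in> S" "y \<in> S"
    then have "x = y" using same_rank_le_imp_eq[OF x y _ xy] S(2) by simp
    then show ?thesis using le_refl lcP \<open>x \<in> S\<close> unfolding f_def by simp
  next
    assume "x \<in> S" "y \<notin> S"
    then show ?thesis
      using lcP[of x] le_trans[of "lc x" x y] x y xy unfolding f_def strict_def by simp
  next
    assume "x \<notin> S" "y \<in> S"
    then have "strict le x y" using xy unfolding strict_def by blast
    then obtain z where "z \<in> P" "r z + 1 = r y" "le x z" "strict le z y"
      using step_down x y by blast
    then show ?thesis using lc_unique \<open>x \<notin> S\<close> \<open>y \<in> S\<close> unfolding f_def by simp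
  next
    assume "x \<notin> S" "y \<notin> S"
    then show ?thesis using xy unfolding f_def by simp
  qed
  moreover have "f q = q" if "q \<in> P - S" for q using that unfolding f_def by simp
  ultimately show ?thesis unfolding retract_of_def by (intro conjI exI[of _ f]) auto
qed

end

locale minimal_automorphic_graded = graded_poset +
  assumes minimal: "minimal_automorphic P le"
begin

lemma card_lower_covers_ge_2:
  assumes p: "p \<in> P" "0 < r p"
  shows "2 \<le> card (lower_covers p)"
proof (rule ccontr)
  assume "\<not> 2 \<le> card (lower_covers p)"
  moreover have "lower_covers p \<noteq> {}" "finite (lower_covers p)"
    using lower_cover[OF p] finite_carrier unfolding lower_covers_def by auto
  ultimately have one: "card (lower_covers p) = 1"
    using card_gt_0_iff[of "lower_covers p"] by linarith
  obtain s where s: "order_automorphism P le s" "\<forall>x\<in>P. s x \<noteq> x"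
    using minimal by (rule minimal_automorphicE)
  \<comment> \<open>Fold each element of rank r p with a unique lower cover onto it; s permutes these.\<close>
  define S where "S = {x\<in>P. r x = r p \<and> card (lower_covers x) = 1}"
  have retract: "retract_of (P - S) P le"
    by (rule retract_Diff_unique_lower_covers[of S "r p"]) (auto simp: S_def)
  have "\<forall>x\<in>S. s x \<in> S"
  proof
    fix x assume x: "x \<in> S"
    have xP: "x \<in> P" using x unfolding S_def by blast
    have "inj_on s (lower_covers x)"
      by (rule inj_on_subset[OF order_automorphismD(4)[OF s(1)]]) (auto simp: lower_covers_def)
    then have "card (lower_covers (s x)) = card (lower_covers x)"
      using automorphism_lower_covers[OF s(1) xP] card_image by metis
    then show "s x \<in> S"
      using x xP order_automorphismD(1)[OF s(1)] automorphism_preserves_rank[OF s(1)]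
      unfolding S_def by simp
  qed
  then have "order_automorphism (P - S) le s"
    by (intro order_automorphism_Diff[OF finite_carrier s(1)]) (auto simp: S_def)
  moreover have "P - S \<noteq> P" using p one unfolding S_def by blast
  moreover have "\<forall>x\<in>P - S. s x \<noteq> x" using s(2) by blast
  ultimately show False
    using minimal_automorphic_no_proper_retract[OF minimal retract] by blast
qed

lemma minimal_automorphic_graded_converse:
  "minimal_automorphic_graded P (\<lambda>x y. le y x) (\<lambda>x. n - r x) n"
  using graded_poset_converse minimal minimal_automorphic_converse
  unfolding minimal_automorphic_graded_def minimal_automorphic_graded_axioms_def by blast

lemma card_upper_covers_ge_2:
  assumes p: "p \<in> P" "r p < n"
  shows "2 \<le> card (upper_covers p)"
proof -
  interpret dual: minimal_automorphic_graded P "\<lambda>x y. le y x" "\<lambda>x. n - r x" n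
    by (rule minimal_automorphic_graded_converse)
  have "n - r q + 1 = n - r p \<longleftrightarrow> r q = r p + 1" if "q \<in> P" for q
    using rank_le[OF that] p by linarith
  then have "dual.lower_covers p = upper_covers p"
    unfolding dual.lower_covers_def upper_covers_def using strict_converse[of le] by blast
  then show ?thesis using dual.card_lower_covers_ge_2[of p] p by simp
qed

end

context graded_poset
begin

definition level :: "nat \<Rightarrow> 'a set" where
  "level k = {p\<in>P. r p = k}"

definition levels_complete :: "nat \<Rightarrow> bool" where
  "levels_complete k \<longleftrightarrow> (\<forall>x\<in>level k. \<forall>y\<in>level (Suc k). le x y)"

definition isolated_level :: "nat \<Rightarrow> bool" where
  "isolated_level k \<longleftrightarrow> k \<le> n \<and> (k = 0 \<or> levels_complete (k - 1)) \<and> (k = n \<or> levels_complete k)"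

lemma finite_level: "finite (level k)"
  using finite_carrier unfolding level_def by simp

lemma level_antichain: "antichain_in P le (level k)"
  unfolding antichain_in_def level_def by (auto intro: same_rank_le_imp_eq)

lemma level_le_iff_eq: "x \<in> level k \<Longrightarrow> y \<in> level k \<Longrightarrow> le x y \<longleftrightarrow> x = y"
  unfolding level_def using same_rank_le_imp_eq[of x y] le_refl[of x] by auto

lemma automorphism_level:
  assumes "order_automorphism P le s" "x \<in> level k"
  shows "s x \<in> level k"
  using assms automorphism_preserves_rank order_automorphismD(1) unfolding level_def by auto

lemma lower_covers_eq: "lower_covers y = {x\<in>P. r x + 1 = r y \<and> le x y}"
  unfolding lower_covers_def strict_def by auto

lemma upper_covers_eq: "upper_covers x = {y\<in>P. r y = r x + 1 \<and> le x y}"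
  unfolding upper_covers_def strict_def by auto

lemma levels_complete_strict:
  assumes c: "levels_complete t" and x: "x \<in> P" "r x \<le> t" and y: "y \<in> P" "Suc t \<le> r y"
  shows "strict le x y"
proof -
  have "t \<le> n" using rank_le[OF y(1)] y(2) by simp
  then obtain u where u: "u \<in> P" "r u = t" "le x u" using above_at_rank x by blast
  obtain w where w: "w \<in> P" "r w = Suc t" "le w y" using below_at_rank y by blast
  have "le u w" using c u w unfolding levels_complete_def level_def by blast
  then have "le x y" using le_trans[of x u w] le_trans[of x w y] x y u w by blast
  moreover have "x \<noteq> y" using x y by auto
  ultimately show ?thesis unfolding strict_def by blast
qed

lemma isolated_level_le_iff:
  assumes iso: "isolated_level k" and u: "u \<in> level k" and y: "y \<in> P" "r y \<noteq> k"
  shows "le u y \<longleftrightarrow> k < r y" and "le y u \<longleftrightarrow> r y < k"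
proof -
  have uP: "u \<in> P" "r u = k" using u unfolding level_def by auto
  have "le u y \<and> \<not> le y u" if "k < r y"
  proof -
    have "levels_complete k" using iso that rank_le[OF y(1)] unfolding isolated_level_def by auto
    then have "strict le u y" using levels_complete_strict[of k u y] uP y that by simp
    then show ?thesis using strict_not_ge uP y unfolding strict_def by blast
  qed
  moreover have "le y u \<and> \<not> le u y" if "r y < k"
  proof -
    have "levels_complete (k - 1)" using iso that unfolding isolated_level_def by auto
    then have "strict le y u" using levels_complete_strict[of "k - 1" y u] uP y that by simp
    then show ?thesis using strict_not_ge uP y unfolding strict_def by blast
  qed
  ultimately show "le u y \<longleftrightarrow> k < r y" and "le y u \<longleftrightarrow> r y < k"
    using y(2) by (meson linorder_neqE_nat)+
qed

lemma isolated_level_le_transfer: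
  assumes iso: "isolated_level k"
    and x: "x \<in> P" "t x \<in> P" "r (t x) = r x" and y: "y \<in> P" "t y \<in> P" "r (t y) = r y"
    and on_level: "r x = k \<Longrightarrow> r y = k \<Longrightarrow> x = y \<longleftrightarrow> t x = t y"
    and off_level: "r x \<noteq> k \<Longrightarrow> r y \<noteq> k \<Longrightarrow> le x y \<longleftrightarrow> le (t x) (t y)"
  shows "le x y \<longleftrightarrow> le (t x) (t y)"
proof -
  have L: "u \<in> level k \<longleftrightarrow> u \<in> P \<and> r u = k" for u unfolding level_def by simp
  consider "r x = k" "r y = k" | "r x = k" "r y \<noteq> k" | "r x \<noteq> k" "r y = k" | "r x \<noteq> k" "r y \<noteq> k"
    by blast
  then show ?thesis
  proof cases
    case 1
    then show ?thesis using level_le_iff_eq L x y on_level by metis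
  next
    case 2
    then show ?thesis using isolated_level_le_iff(1)[OF iso] L x y by metis
  next
    case 3
    then show ?thesis using isolated_level_le_iff(2)[OF iso] L x y by metis
  next
    case 4
    then show ?thesis by (rule off_level)
  qed
qed

lemma retract_isolated_level_Diff:
  assumes iso: "isolated_level k" and a: "a \<in> level k" and c: "c \<in> level k" and "a \<noteq> c"
  shows "retract_of (P - {c}) P le"
proof -
  have aP: "a \<in> P" and cP: "c \<in> P" using a c unfolding level_def by auto
  define f where "f x = (if x = c then a else x)" for x
  have "le (f x) (f y)" if x: "x \<in> P" and y: "y \<in> P" and xy: "le x y" for x y
  proof (cases "x = c"; cases "y = c")
    assume "x = c" "y \<noteq> c"
    then have "r y \<noteq> k" using level_le_iff_eq[OF c] xy y unfolding level_def by auto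
    then show ?thesis
      using isolated_level_le_iff(1)[OF iso _ y] a c xy \<open>x = c\<close> \<open>y \<noteq> c\<close> unfolding f_def by auto
  next
    assume "x \<noteq> c" "y = c"
    then have "r x \<noteq> k" using level_le_iff_eq[OF _ c] xy x unfolding level_def by auto
    then show ?thesis
      using isolated_level_le_iff(2)[OF iso _ x] a c xy \<open>x \<noteq> c\<close> \<open>y = c\<close> unfolding f_def by auto
  qed (use xy le_refl[OF aP] in \<open>auto simp: f_def\<close>)
  moreover have "f x \<in> P - {c}" if "x \<in> P" for x
    using that aP \<open>a \<noteq> c\<close> unfolding f_def by auto
  moreover have "f q = q" if "q \<in> P - {c}" for q using that unfolding f_def by simp
  ultimately show ?thesis unfolding retract_of_def by (intro conjI exI[of _ f]) auto
qed

lemma automorphic_isolated_level_Diff: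
  assumes iso: "isolated_level k" and abc: "level k = {a, b, c}" "a \<noteq> b" "b \<noteq> c" "a \<noteq> c"
    and s: "order_automorphism P le s" and fp: "\<forall>x\<in>P. s x \<noteq> x"
  shows "automorphic (P - {c}) le"
proof -
  define Q where "Q = P - {c}"
  have ab: "a \<in> level k" "b \<in> level k" and c: "c \<in> level k" using abc by auto
  have QP: "Q \<subseteq> P" unfolding Q_def by blast
  have off: "x \<in> P" "r x \<noteq> k" if "x \<in> Q" "x \<noteq> a" "x \<noteq> b" for x
    using that abc(1) unfolding Q_def level_def by auto
  have s_off: "s x \<in> Q" "s x \<noteq> a" "s x \<noteq> b" "r (s x) = r x" if "x \<in> Q" "x \<noteq> a" "x \<noteq> b" for x
    using off[OF that] order_automorphismD(1)[OF s] automorphism_preserves_rank[OF s] ab c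
    unfolding Q_def level_def by auto
  define t where "t x = (if x = a then b else if x = b then a else s x)" for x
  have tQ: "t ` Q \<subseteq> Q" using s_off ab abc unfolding t_def Q_def level_def by auto
  have t_inj: "inj_on t Q"
  proof (rule inj_onI)
    fix x y assume x: "x \<in> Q" and y: "y \<in> Q" and e: "t x = t y"
    show "x = y"
      using e s_off[OF x] s_off[OF y] order_automorphismD(4)[OF s] x y QP abc(2)
      unfolding t_def inj_on_def by (auto split: if_splits)
  qed
  have t_bij: "bij_betw t Q Q"
    using endo_inj_surj[OF finite_subset[OF QP finite_carrier] tQ t_inj] t_inj
    unfolding bij_betw_def by blast
  have t_rank: "t x \<in> P" "r (t x) = r x" if "x \<in> Q" for x
    using that s_off ab QP unfolding t_def level_def by auto
  have "le x y \<longleftrightarrow> le (t x) (t y)" if x: "x \<in> Q" and y: "y \<in> Q" for x y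
  proof (rule isolated_level_le_transfer[OF iso _ t_rank[OF x] _ t_rank[OF y]])
    show "x \<in> P" "y \<in> P" using x y QP by blast+
    assume "r x = k" "r y = k"
    then have "x = a \<or> x = b" "y = a \<or> y = b" using x y abc unfolding Q_def level_def by auto
    then show "x = y \<longleftrightarrow> t x = t y" using abc(2) unfolding t_def by auto
  next
    assume "r x \<noteq> k" "r y \<noteq> k"
    then have "x \<noteq> a" "x \<noteq> b" "y \<noteq> a" "y \<noteq> b" using ab unfolding level_def by auto
    then show "le x y \<longleftrightarrow> le (t x) (t y)"
      using order_automorphismD(2)[OF s] x y QP unfolding t_def by auto
  qed
  moreover have "t x \<noteq> x" if "x \<in> Q" for x
    using that fp abc(2) QP unfolding t_def by auto
  ultimately show ?thesis unfolding automorphic_def Q_def using t_bij Q_def by blast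
qed

lemma automorphism_image_level:
  assumes s: "order_automorphism P le s"
  shows "s ` level k = level k"
proof -
  have "s ` level k \<subseteq> level k" using automorphism_level[OF s] by blast
  moreover have "inj_on s (level k)"
    by (rule inj_on_subset[OF order_automorphismD(4)[OF s]]) (auto simp: level_def)
  ultimately show ?thesis using endo_inj_surj[OF finite_level] by blast
qed

end

section \<open>Crowns\<close>

definition crown_levels :: "'a set \<Rightarrow> 'a set \<Rightarrow> ('a \<Rightarrow> 'a \<Rightarrow> bool) \<Rightarrow> bool" where
  "crown_levels A B le \<longleftrightarrow> card A = 3 \<and> card B = 3 \<and>
     (\<forall>x\<in>A. \<exists>!y. y \<in> B \<and> \<not> le x y) \<and> (\<forall>y\<in>B. \<exists>!x. x \<in> A \<and> \<not> le x y)"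

lemma invariant_subset_card_3:
  assumes fin: "finite L" and card: "card L = 3" and S: "S \<subseteq> L" and fL: "\<forall>x\<in>L. f x \<in> L"
    and inv: "\<forall>x\<in>L. f x \<in> S \<longleftrightarrow> x \<in> S" and fp: "\<forall>x\<in>L. f x \<noteq> x"
  shows "S = {} \<or> S = L"
proof -
  have finS: "finite S" using finite_subset[OF S fin] .
  have "card S \<le> 3" using card_mono[OF fin S] card by simp
  then consider "card S = 0" | "card S = 1" | "card S = 2" | "card S = 3" by linarith
  then show ?thesis
  proof cases
    case 1
    then show ?thesis using finS by simp
  next
    case 2
    then obtain t where t: "S = {t}" using card_1_singletonE by blast
    then have "f t = t" using inv S by blast
    then show ?thesis using fp t S by blast
  next
    case 3
    then have "card (L - S) = 1" using card_Diff_subset[OF finS S] card by simp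
    then obtain t where t: "L - S = {t}" using card_1_singletonE by blast
    then have "f t \<in> L - S" using fL inv by blast
    then have "f t = t" using t by blast
    then show ?thesis using fp t by blast
  next
    case 4
    then show ?thesis using card_subset_eq[OF fin S] card by simp
  qed
qed

lemma at_most_one_outside:
  assumes fin: "finite B" and card: "card B = 3" and S: "S \<subseteq> B" "2 \<le> card S"
    and y: "y \<in> B - S" and y': "y' \<in> B - S"
  shows "y = y'"
proof (rule ccontr)
  assume "y \<noteq> y'"
  then have "card (B - {y, y'}) = 1" using card y y' fin by (simp add: card_Diff_subset)
  moreover have "S \<subseteq> B - {y, y'}" using S y y' by blast
  ultimately have "card S \<le> 1" using card_mono[of "B - {y, y'}" S] fin by simp
  then show False using S by simp
qed

lemma crown_levelsI:
  assumes A: "finite A" "card A = 3" and B: "finite B" "card B = 3"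
    and miss: "\<forall>x\<in>A. \<exists>y\<in>B. \<not> le x y"
    and up: "\<forall>x\<in>A. 2 \<le> card {y\<in>B. le x y}"
    and down: "\<forall>y\<in>B. 2 \<le> card {x\<in>A. le x y}"
  shows "crown_levels A B le"
proof -
  have up_unique: "y = y'" if "x \<in> A" "y \<in> B" "\<not> le x y" "y' \<in> B" "\<not> le x y'" for x y y'
    using at_most_one_outside[OF B, of "{y\<in>B. le x y}"] up that by blast
  have down_unique: "x = x'" if "y \<in> B" "x \<in> A" "\<not> le x y" "x' \<in> A" "\<not> le x' y" for x x' y
    using at_most_one_outside[OF A, of "{x\<in>A. le x y}"] down that by blast
  define m where "m x = (THE y. y \<in> B \<and> \<not> le x y)" for x
  have m: "m x \<in> B" "\<not> le x (m x)" if "x \<in> A" for x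
    using theI'[of "\<lambda>y. y \<in> B \<and> \<not> le x y"] miss up_unique that unfolding m_def by blast+
  have inj: "inj_on m A" using m down_unique by (intro inj_onI) metis
  have "card (m ` A) = card B" using card_image[OF inj] A(2) B(2) by simp
  then have "m ` A = B" by (intro card_subset_eq[OF B(1)]) (use m(1) in auto)
  then have "\<forall>y\<in>B. \<exists>x\<in>A. \<not> le x y" using m(2) by blast
  then have "\<forall>y\<in>B. \<exists>!x. x \<in> A \<and> \<not> le x y" using down_unique by blast
  moreover have "\<forall>x\<in>A. \<exists>!y. y \<in> B \<and> \<not> le x y" using miss up_unique by blast
  ultimately show ?thesis unfolding crown_levels_def using A(2) B(2) by blast
qed

lemma C6_missing_above:
  assumes "x < 3"
  shows "\<exists>!y. y \<in> {3..<6} \<and> \<not> C6_le x y"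
proof (rule ex1I[of _ "3 + (x + 1) mod 3"])
  have x: "x = 0 \<or> x = 1 \<or> x = 2" using assms by auto
  then show "3 + (x + 1) mod 3 \<in> {3..<6} \<and> \<not> C6_le x (3 + (x + 1) mod 3)"
    by (auto simp: C6_le_def)
  fix y assume y: "y \<in> {3..<6} \<and> \<not> C6_le x y"
  then have "y = 3 \<or> y = 4 \<or> y = 5" by auto
  then show "y = 3 + (x + 1) mod 3" using x y by (auto simp: C6_le_def)
qed

lemma C6_missing_below:
  assumes "y \<in> {3..<6}"
  shows "\<exists>!x. x \<in> {0..<3} \<and> \<not> C6_le x y"
proof (rule ex1I[of _ "(y + 2) mod 3"])
  have y: "y = 3 \<or> y = 4 \<or> y = 5" using assms by auto
  then show "(y + 2) mod 3 \<in> {0..<3} \<and> \<not> C6_le ((y + 2) mod 3) y"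
    by (auto simp: C6_le_def)
  fix x assume x: "x \<in> {0..<3} \<and> \<not> C6_le x y"
  then have "x = 0 \<or> x = 1 \<or> x = 2" by auto
  then show "x = (y + 2) mod 3" using x y by (auto simp: C6_le_def)
qed

lemma crown_levels_C6: "crown_levels {0..<3} {3..<6} C6_le"
  unfolding crown_levels_def using C6_missing_above C6_missing_below by auto

lemma crown_levels_transfer:
  assumes A: "bij_betw h A A'" and B: "bij_betw h B B'"
    and iso: "\<forall>x\<in>A. \<forall>y\<in>B. le x y \<longleftrightarrow> le' (h x) (h y)"
    and cr: "crown_levels A' B' le'"
  shows "crown_levels A B le"
proof -
  have "card A = 3" "card B = 3"
    using cr bij_betw_same_card[OF A] bij_betw_same_card[OF B]
    unfolding crown_levels_def by simp_all
  moreover have "\<exists>!y. y \<in> B \<and> \<not> le x y" if x: "x \<in> A" for x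
  proof -
    obtain y' where y': "y' \<in> B'" "\<not> le' (h x) y'" "\<forall>z\<in>B'. \<not> le' (h x) z \<longrightarrow> z = y'"
      using cr bij_betwE[OF A] x unfolding crown_levels_def by metis
    obtain y where y: "y \<in> B" "h y = y'" using y'(1) bij_betw_imp_surj_on[OF B] by blast
    have "z = y" if "z \<in> B" "\<not> le x z" for z
      using y'(3) iso x that y bij_betwE[OF B] bij_betw_imp_inj_on[OF B] by (metis inj_onD)
    then show ?thesis using iso x y y'(2) by blast
  qed
  moreover have "\<exists>!x. x \<in> A \<and> \<not> le x y" if y: "y \<in> B" for y
  proof -
    obtain x' where x': "x' \<in> A'" "\<not> le' x' (h y)" "\<forall>z\<in>A'. \<not> le' z (h y) \<longrightarrow> z = x'"
      using cr bij_betwE[OF B] y unfolding crown_levels_def by metis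
    obtain x where x: "x \<in> A" "h x = x'" using x'(1) bij_betw_imp_surj_on[OF A] by blast
    have "z = x" if "z \<in> A" "\<not> le z y" for z
      using x'(3) iso y that x bij_betwE[OF A] bij_betw_imp_inj_on[OF A] by (metis inj_onD)
    then show ?thesis using iso y x x'(2) by blast
  qed
  ultimately show ?thesis unfolding crown_levels_def by blast
qed

lemma crown_levelsE:
  assumes cr: "crown_levels A B le"
  obtains x0 x1 x2 y0 y1 y2 where "A = {x0, x1, x2}" "B = {y0, y1, y2}"
    "x0 \<noteq> x1" "x1 \<noteq> x2" "x0 \<noteq> x2" "y0 \<noteq> y1" "y1 \<noteq> y2" "y0 \<noteq> y2"
    "\<not> le x0 y0" "\<not> le x1 y1" "\<not> le x2 y2"
    "le x0 y1" "le x0 y2" "le x1 y0" "le x1 y2" "le x2 y0" "le x2 y1"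
proof -
  have cA: "card A = 3" and cB: "card B = 3"
    and missA: "\<forall>x\<in>A. \<exists>!y. y \<in> B \<and> \<not> le x y" and missB: "\<forall>y\<in>B. \<exists>!x. x \<in> A \<and> \<not> le x y"
    using cr unfolding crown_levels_def by blast+
  obtain x0 x1 x2 where xs: "A = {x0, x1, x2}" "x0 \<noteq> x1" "x1 \<noteq> x2" "x0 \<noteq> x2"
    using cA unfolding card_3_iff by blast
  define m where "m x = (THE y. y \<in> B \<and> \<not> le x y)" for x
  have m: "m x \<in> B" "\<not> le x (m x)" if "x \<in> A" for x
    using theI'[OF missA[rule_format, OF that]] unfolding m_def by blast+
  have m_unique: "le x y" if "x \<in> A" "y \<in> B" "y \<noteq> m x" for x y
    using missA[rule_format, OF that(1)] m[OF that(1)] that(2,3) by blast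
  have m_inj: "x = x'" if "x \<in> A" "x' \<in> A" "m x = m x'" for x x'
    using missB[rule_format, of "m x"] m[OF that(1)] m[OF that(2)] that by auto
  have xA: "x0 \<in> A" "x1 \<in> A" "x2 \<in> A" using xs(1) by auto
  have yd: "m x0 \<noteq> m x1" "m x1 \<noteq> m x2" "m x0 \<noteq> m x2"
    using m_inj[OF xA(1,2)] m_inj[OF xA(2,3)] m_inj[OF xA(1,3)] xs(2-4) by blast+
  have "finite B" using cB by (intro card_ge_0_finite) simp
  then have "B = {m x0, m x1, m x2}"
    using card_subset_eq[of B "{m x0, m x1, m x2}"] m(1)[OF xA(1)] m(1)[OF xA(2)] m(1)[OF xA(3)]
      yd cB by simp
  then show thesis
    using that[OF xs(1) _ xs(2-4) yd] m(2)[OF xA(1)] m(2)[OF xA(2)] m(2)[OF xA(3)]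
      m_unique[OF xA(1)] m_unique[OF xA(2)] m_unique[OF xA(3)] m(1) xA yd by simp
qed

lemma order_iso_C6_if_crown_levels:
  assumes cr: "crown_levels A B le"
    and antiA: "\<forall>x\<in>A. \<forall>y\<in>A. le x y \<longleftrightarrow> x = y" and antiB: "\<forall>x\<in>B. \<forall>y\<in>B. le x y \<longleftrightarrow> x = y"
    and noBA: "\<forall>x\<in>A. \<forall>y\<in>B. \<not> le y x"
  shows "order_iso (A \<union> B) le C6 C6_le"
proof -
  obtain x0 x1 x2 y0 y1 y2 where AB: "A = {x0, x1, x2}" "B = {y0, y1, y2}"
    and xd: "x0 \<noteq> x1" "x1 \<noteq> x2" "x0 \<noteq> x2" and yd: "y0 \<noteq> y1" "y1 \<noteq> y2" "y0 \<noteq> y2"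
    and xy: "\<not> le x0 y0" "\<not> le x1 y1" "\<not> le x2 y2"
      "le x0 y1" "le x0 y2" "le x1 y0" "le x1 y2" "le x2 y0" "le x2 y1"
    using crown_levelsE[OF cr] by blast
  have xx: "le x0 x0" "le x1 x1" "le x2 x2" "\<not> le x0 x1" "\<not> le x0 x2" "\<not> le x1 x0"
    "\<not> le x1 x2" "\<not> le x2 x0" "\<not> le x2 x1"
    using antiA xd unfolding AB by auto
  have yy: "le y0 y0" "le y1 y1" "le y2 y2" "\<not> le y0 y1" "\<not> le y0 y2" "\<not> le y1 y0"
    "\<not> le y1 y2" "\<not> le y2 y0" "\<not> le y2 y1"
    using antiB yd unfolding AB by auto
  have yx: "\<not> le y0 x0" "\<not> le y0 x1" "\<not> le y0 x2" "\<not> le y1 x0" "\<not> le y1 x1"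
    "\<not> le y1 x2" "\<not> le y2 x0" "\<not> le y2 x1" "\<not> le y2 x2"
    using noBA unfolding AB by auto
  have ne: "x0 \<noteq> y0" "x0 \<noteq> y1" "x0 \<noteq> y2" "x1 \<noteq> y0" "x1 \<noteq> y1" "x1 \<noteq> y2"
    "x2 \<noteq> y0" "x2 \<noteq> y1" "x2 \<noteq> y2"
    using xx(1-3) yx by metis+
  \<comment> \<open>In C6 the element i < 3 misses exactly 3 + (i + 1) mod 3.\<close>
  define f where "f z = (if z = x0 then 0 else if z = x1 then 1 else if z = x2 then 2 else
      if z = y0 then 4 else if z = y1 then 5 else (3::nat))" for z
  have fv: "f x0 = 0" "f x1 = 1" "f x2 = 2" "f y0 = 4" "f y1 = 5" "f y2 = 3"
    unfolding f_def using xd yd ne by simp_all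
  have U: "A \<union> B = {x0, x1, x2, y0, y1, y2}" using AB by blast
  have "bij_betw f (A \<union> B) C6"
  proof (rule bij_betw_imageI)
    show "inj_on f (A \<union> B)" unfolding U inj_on_def using fv by auto
    show "f ` (A \<union> B) = C6" unfolding U C6_def using fv by auto
  qed
  moreover have "\<forall>u\<in>A \<union> B. \<forall>v\<in>A \<union> B. le u v \<longleftrightarrow> C6_le (f u) (f v)"
    unfolding U using fv xx yy xy yx by (simp add: C6_le_def)
  ultimately show ?thesis unfolding order_iso_def by blast
qed

context graded_poset
begin

lemma order_iso_C6_level_images:
  assumes h: "bij_betw h (level i \<union> level (Suc i)) C6"
    and h_iso: "\<forall>x\<in>level i \<union> level (Suc i). \<forall>y\<in>level i \<union> level (Suc i).
      le x y \<longleftrightarrow> C6_le (h x) (h y)"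
  shows "h ` level i = {0..<3}" and "h ` level (Suc i) = {3..<6}"
proof -
  let ?A = "level i" and ?B = "level (Suc i)"
  have img: "h ` (?A \<union> ?B) = {0..<6}" and inj: "inj_on h (?A \<union> ?B)"
    using h unfolding bij_betw_def C6_def by auto
  have hA: "h x < 3" if x: "x \<in> ?A" for x
  proof (rule ccontr)
    assume ge: "\<not> h x < 3"
    have "h x < 6" using img x by auto
    then have "h x - 3 \<in> h ` (?A \<union> ?B)" unfolding img by simp
    then obtain z where z: "z \<in> ?A \<union> ?B" "h z = h x - 3" by (metis imageE)
    have "C6_le (h z) (h x)" "h z \<noteq> h x" using z(2) ge \<open>h x < 6\<close> by (auto simp: C6_le_def)
    then have "strict le z x" using h_iso z(1) x unfolding strict_def by auto
    then have "r z < r x" using rank_strict_mono z(1) x unfolding level_def by blast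
    then show False using z(1) x unfolding level_def by auto
  qed
  have hB: "3 \<le> h y" if y: "y \<in> ?B" for y
  proof -
    obtain q where q: "q \<in> P" "strict le q y" "r q + 1 = r y"
      using lower_cover y unfolding level_def by fastforce
    then have "q \<in> ?A" using y unfolding level_def by auto
    then have "C6_le (h q) (h y)" "h q \<noteq> h y"
      using h_iso inj y q(2) unfolding strict_def inj_on_def by blast+
    then show ?thesis by (auto simp: C6_le_def)
  qed
  show "h ` ?A = {0..<3}"
  proof
    show "h ` ?A \<subseteq> {0..<3}" using hA by auto
    show "{0..<3} \<subseteq> h ` ?A"
    proof
      fix a :: nat assume "a \<in> {0..<3}"
      then obtain z where "z \<in> ?A \<union> ?B" "a = h z" "a < 3" using img by force
      then show "a \<in> h ` ?A" using hB by fastforce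
    qed
  qed
  show "h ` ?B = {3..<6}"
  proof
    show "h ` ?B \<subseteq> {3..<6}" using hB img by auto
    show "{3..<6} \<subseteq> h ` ?B"
    proof
      fix a :: nat assume "a \<in> {3..<6}"
      then obtain z where "z \<in> ?A \<union> ?B" "a = h z" "3 \<le> a" using img by force
      then show "a \<in> h ` ?B" using hA by fastforce
    qed
  qed
qed

lemma crown_levels_if_order_iso_C6:
  assumes "order_iso (level i \<union> level (Suc i)) le C6 C6_le"
  shows "crown_levels (level i) (level (Suc i)) le"
proof -
  obtain h where h: "bij_betw h (level i \<union> level (Suc i)) C6"
    and h_iso: "\<forall>x\<in>level i \<union> level (Suc i). \<forall>y\<in>level i \<union> level (Suc i).
      le x y \<longleftrightarrow> C6_le (h x) (h y)"
    using assms unfolding order_iso_def by blast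
  have inj: "inj_on h (level i \<union> level (Suc i))" using h unfolding bij_betw_def by blast
  have "bij_betw h (level i) {0..<3}" "bij_betw h (level (Suc i)) {3..<6}"
    using order_iso_C6_level_images[OF h h_iso] inj_on_subset[OF inj]
    unfolding bij_betw_def by blast+
  moreover have "\<forall>x\<in>level i. \<forall>y\<in>level (Suc i). le x y \<longleftrightarrow> C6_le (h x) (h y)" using h_iso by blast
  ultimately show ?thesis using crown_levels_transfer crown_levels_C6 by blast
qed

end

section \<open>Consecutive levels in width three\<close>

locale minimal_automorphic_graded_width3 = minimal_automorphic_graded +
  assumes width: "width_le P le 3" and nonempty: "P \<noteq> {}"
begin

lemma level_nonempty:
  assumes "k \<le> n"
  shows "level k \<noteq> {}"
proof -
  obtain p where p: "p \<in> P" using nonempty by blast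
  have "\<exists>q\<in>P. r q = k"
  proof (cases "k \<le> r p")
    case True
    then show ?thesis using below_at_rank[OF p] by blast
  next
    case False
    then show ?thesis using above_at_rank[OF p _ assms] by fastforce
  qed
  then show ?thesis unfolding level_def by blast
qed

lemma card_level:
  assumes "k \<le> n"
  shows "card (level k) = 2 \<or> card (level k) = 3"
proof -
  have "card (level k) \<le> 3" using width level_antichain unfolding width_le_def by blast
  moreover have "card (level k) \<noteq> 0" using level_nonempty[OF assms] finite_level by simp
  moreover have "card (level k) \<noteq> 1"
  proof
    assume "card (level k) = 1"
    then obtain q where q: "level k = {q}" using card_1_singletonE by blast
    obtain s where s: "order_automorphism P le s" "\<forall>x\<in>P. s x \<noteq> x"
      using minimal by (rule minimal_automorphicE)
    have "s q = q" using automorphism_level[OF s(1), of q k] q by blast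
    then show False using s(2) q unfolding level_def by blast
  qed
  ultimately show ?thesis by linarith
qed

lemma card_upper_neighbours:
  assumes x: "x \<in> level k" and k: "k < n"
  shows "2 \<le> card {y\<in>level (Suc k). le x y}"
proof -
  have "upper_covers x = {y\<in>level (Suc k). le x y}"
    using x unfolding upper_covers_eq level_def by auto
  moreover have "2 \<le> card (upper_covers x)"
    using card_upper_covers_ge_2 x k unfolding level_def by simp
  ultimately show ?thesis by simp
qed

lemma card_lower_neighbours:
  assumes y: "y \<in> level (Suc k)"
  shows "2 \<le> card {x\<in>level k. le x y}"
proof -
  have "lower_covers y = {x\<in>level k. le x y}"
    using y unfolding lower_covers_eq level_def by auto
  moreover have "2 \<le> card (lower_covers y)"
    using card_lower_covers_ge_2 y unfolding level_def by simp
  ultimately show ?thesis by simp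
qed

lemma levels_complete_if_card_2:
  assumes k: "k < n" and two: "card (level k) = 2 \<or> card (level (Suc k)) = 2"
  shows "levels_complete k"
  unfolding levels_complete_def
proof (intro ballI)
  fix x y assume x: "x \<in> level k" and y: "y \<in> level (Suc k)"
  show "le x y"
  proof (cases "card (level (Suc k)) = 2")
    case True
    have sub: "{y\<in>level (Suc k). le x y} \<subseteq> level (Suc k)" by blast
    then have "card {y\<in>level (Suc k). le x y} = card (level (Suc k))"
      using card_mono[OF finite_level sub] card_upper_neighbours[OF x k] True by linarith
    then have "{y\<in>level (Suc k). le x y} = level (Suc k)"
      using card_subset_eq[OF finite_level sub] by blast
    then show ?thesis using y by blast
  next
    case False
    then have "card (level k) = 2" using two by blast
    have sub: "{x\<in>level k. le x y} \<subseteq> level k" by blast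
    then have "card {x\<in>level k. le x y} = card (level k)"
      using card_mono[OF finite_level sub] card_lower_neighbours[OF y] \<open>card (level k) = 2\<close>
      by linarith
    then have "{x\<in>level k. le x y} = level k"
      using card_subset_eq[OF finite_level sub] by blast
    then show ?thesis using x by blast
  qed
qed

lemma level_pair_cases:
  assumes k: "k < n"
  shows "levels_complete k \<or> crown_levels (level k) (level (Suc k)) le"
proof (cases "card (level k) = 3 \<and> card (level (Suc k)) = 3")
  case False
  then have "card (level k) = 2 \<or> card (level (Suc k)) = 2"
    using card_level[of k] card_level[of "Suc k"] k by auto
  then show ?thesis using levels_complete_if_card_2[OF k] by blast
next
  case True
  let ?A = "level k" and ?B = "level (Suc k)"
  obtain s where s: "order_automorphism P le s" "\<forall>x\<in>P. s x \<noteq> x"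
    using minimal by (rule minimal_automorphicE)
  let ?T = "{x\<in>?A. \<forall>y\<in>?B. le x y}"
  have sA: "\<forall>x\<in>?A. s x \<in> ?A" using automorphism_level[OF s(1)] by blast
  have "\<forall>x\<in>?A. s x \<in> ?T \<longleftrightarrow> x \<in> ?T"
  proof
    fix x assume x: "x \<in> ?A"
    have "(\<forall>y\<in>?B. le (s x) y) \<longleftrightarrow> (\<forall>y\<in>s ` ?B. le (s x) y)"
      by (simp only: automorphism_image_level[OF s(1)])
    also have "\<dots> \<longleftrightarrow> (\<forall>y\<in>?B. le (s x) (s y))" by simp
    also have "\<dots> \<longleftrightarrow> (\<forall>y\<in>?B. le x y)"
      using order_automorphismD(2)[OF s(1)] x unfolding level_def by auto
    finally show "s x \<in> ?T \<longleftrightarrow> x \<in> ?T" using x sA by blast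
  qed
  moreover have "\<forall>x\<in>?A. s x \<noteq> x" using s(2) unfolding level_def by blast
  ultimately have "?T = {} \<or> ?T = ?A"
    using invariant_subset_card_3[OF finite_level, of k ?T s] True sA by blast
  then show ?thesis
  proof
    assume "?T = {}"
    then have "\<forall>x\<in>?A. \<exists>y\<in>?B. \<not> le x y" by blast
    then have "crown_levels ?A ?B le"
      using crown_levelsI[OF finite_level _ finite_level] True card_upper_neighbours[OF _ k]
        card_lower_neighbours by blast
    then show ?thesis by blast
  next
    assume "?T = ?A"
    then show ?thesis unfolding levels_complete_def by blast
  qed
qed

lemma card_isolated_level_ne_3:
  assumes "isolated_level k"
  shows "card (level k) \<noteq> 3"
proof
  assume "card (level k) = 3"
  then obtain a b c where abc: "level k = {a, b, c}" "a \<noteq> b" "b \<noteq> c" "a \<noteq> c"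
    unfolding card_3_iff by blast
  obtain s where s: "order_automorphism P le s" "\<forall>x\<in>P. s x \<noteq> x"
    using minimal by (rule minimal_automorphicE)
  have "retract_of (P - {c}) P le"
    using retract_isolated_level_Diff[OF assms, of a c] abc by blast
  moreover have "automorphic (P - {c}) le"
    using automorphic_isolated_level_Diff[OF assms abc s] .
  moreover have "P - {c} \<noteq> P" using abc(1) unfolding level_def by blast
  ultimately show False using minimal unfolding minimal_automorphic_def by blast
qed

end

section \<open>Six-towers are automorphic\<close>

lemma Suc_mod_3_eq_iff: "a < 3 \<Longrightarrow> b < 3 \<Longrightarrow> (a + 1) mod 3 = (b + 1) mod 3 \<longleftrightarrow> a = b"
  for a b :: nat
proof -
  assume "a < 3" "b < 3"
  then have "a = 0 \<or> a = 1 \<or> a = 2" "b = 0 \<or> b = 1 \<or> b = 2" by auto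
  then show ?thesis by auto
qed

locale crown_stack = graded_poset +
  assumes one_le_n: "1 \<le> n"
    and crowns: "\<And>i. i < n \<Longrightarrow> crown_levels (level i) (level (Suc i)) le"
begin

lemma card_level_eq_3: "i \<le> n \<Longrightarrow> card (level i) = 3"
  using crowns[of i] crowns[of "i - 1"] one_le_n unfolding crown_levels_def
  by (cases "i < n") auto

definition missing :: "nat \<Rightarrow> 'a \<Rightarrow> 'a" where
  "missing i y = (THE x. x \<in> level i \<and> \<not> le x y)"

lemma missingD:
  assumes "i < n" "y \<in> level (Suc i)"
  shows "missing i y \<in> level i" "\<not> le (missing i y) y"
    and "\<And>x. x \<in> level i \<Longrightarrow> le x y \<longleftrightarrow> x \<noteq> missing i y"
proof -
  have ex1: "\<exists>!x. x \<in> level i \<and> \<not> le x y"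
    using crowns[OF assms(1)] assms(2) unfolding crown_levels_def by blast
  show "missing i y \<in> level i" "\<not> le (missing i y) y"
    using theI'[OF ex1] unfolding missing_def by blast+
  then show "\<And>x. x \<in> level i \<Longrightarrow> le x y \<longleftrightarrow> x \<noteq> missing i y"
    using ex1 by blast
qed

lemma bij_missing:
  assumes i: "i < n"
  shows "bij_betw (missing i) (level (Suc i)) (level i)"
proof -
  have ex1: "\<exists>!y. y \<in> level (Suc i) \<and> \<not> le x y" if "x \<in> level i" for x
    using crowns[OF i] that unfolding crown_levels_def by blast
  have inj: "inj_on (missing i) (level (Suc i))"
  proof (rule inj_onI)
    fix y y' assume y: "y \<in> level (Suc i)" "y' \<in> level (Suc i)" "missing i y = missing i y'"
    then show "y = y'"
      using ex1[OF missingD(1)[OF i y(1)]] missingD(2)[OF i y(1)] missingD(2)[OF i y(2)] by metis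
  qed
  moreover have "missing i ` level (Suc i) = level i"
  proof (rule card_subset_eq[OF finite_level])
    show "missing i ` level (Suc i) \<subseteq> level i" using missingD(1)[OF i] by blast
    show "card (missing i ` level (Suc i)) = card (level i)"
      using card_image[OF inj] card_level_eq_3 i by simp
  qed
  ultimately show ?thesis unfolding bij_betw_def by blast
qed

lemma le_two_levels_up:
  assumes i: "Suc i < n" and x: "x \<in> level i" and z: "z \<in> level (Suc (Suc i))"
  shows "le x z"
proof -
  obtain m where m: "\<forall>y\<in>level (Suc i). \<not> le x y \<longrightarrow> y = m"
    using crowns[of i] i x unfolding crown_levels_def by fastforce
  let ?w = "missing (Suc i) z"
  have "card {m, ?w} \<le> 2" by (cases "m = ?w") simp_all
  moreover have "card (level (Suc i)) - card {m, ?w} \<le> card (level (Suc i) - {m, ?w})"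
    by (rule diff_card_le_card_Diff) simp
  ultimately have "card (level (Suc i) - {m, ?w}) \<noteq> 0"
    using card_level_eq_3[of "Suc i"] i by linarith
  then have "level (Suc i) - {m, ?w} \<noteq> {}" by (metis card.empty)
  then obtain u where "u \<in> level (Suc i) - {m, ?w}" by blast
  then have u: "u \<in> level (Suc i)" "u \<noteq> m" "u \<noteq> ?w" by blast+
  have "le x u" using m u by blast
  moreover have "le u z" using missingD(3)[OF i z u(1)] u(3) by blast
  ultimately show ?thesis using le_trans[of x u z] x u z unfolding level_def by blast
qed

text \<open>Level 0 is enumerated arbitrarily; every other element inherits the label of the unique
  element of the level below that is not below it. Then adjacent elements are comparable iff
  their labels differ, and adding 1 mod 3 to all labels is an automorphism.\<close>

definition label0 :: "'a \<Rightarrow> nat" where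
  "label0 = (SOME f. bij_betw f (level 0) {0..<3})"

primrec label :: "nat \<Rightarrow> 'a \<Rightarrow> nat" where
  "label 0 = label0"
| "label (Suc i) = label i \<circ> missing i"

lemma bij_label: "i \<le> n \<Longrightarrow> bij_betw (label i) (level i) {0..<3}"
proof (induction i)
  case 0
  have "\<exists>f. bij_betw f (level 0) {0..<3::nat}"
    using ex_bij_betw_finite_nat[OF finite_level[of 0]] card_level_eq_3[of 0] by simp
  then show ?case unfolding label.simps label0_def by (rule someI_ex)
next
  case (Suc i)
  then show ?case using bij_betw_trans[OF bij_missing Suc.IH] by (simp add: comp_def)
qed

definition crown_label :: "'a \<Rightarrow> nat" where
  "crown_label x = label (r x) x"

lemma crown_label_lt_3: "x \<in> P \<Longrightarrow> crown_label x < 3"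
  using bij_betwE[OF bij_label] rank_le unfolding crown_label_def level_def by fastforce

lemma crown_label_inj:
  assumes "x \<in> P" "y \<in> P" "r x = r y" "crown_label x = crown_label y"
  shows "x = y"
  using bij_betw_imp_inj_on[OF bij_label[OF rank_le[OF assms(1)]]] assms
  unfolding crown_label_def level_def inj_on_def by auto

lemma le_iff_crown_labels:
  assumes x: "x \<in> P" and y: "y \<in> P"
  shows "le x y \<longleftrightarrow> x = y \<or> (r y = r x + 1 \<and> crown_label y \<noteq> crown_label x) \<or> r x + 2 \<le> r y"
proof -
  consider "r y < r x" | "r y = r x" | "r y = r x + 1" | "r x + 2 \<le> r y" by linarith
  then show ?thesis
  proof cases
    case 1
    then have "\<not> le x y" using rank_mono[OF x y] by linarith
    then show ?thesis using 1 by auto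
  next
    case 2
    then have "le x y \<longleftrightarrow> x = y" using same_rank_le_imp_eq[OF x y 2[symmetric]] le_refl[OF x] by blast
    then show ?thesis using 2 by auto
  next
    case 3
    let ?i = "r x"
    have i: "?i < n" using rank_le[OF y] 3 by simp
    have xL: "x \<in> level ?i" and yL: "y \<in> level (Suc ?i)" using x y 3 unfolding level_def by auto
    have "inj_on (label ?i) (level ?i)" using bij_betw_imp_inj_on[OF bij_label] i by simp
    then have "label ?i (missing ?i y) = label ?i x \<longleftrightarrow> missing ?i y = x"
      using inj_on_eq_iff xL missingD(1)[OF i yL] by metis
    moreover have "crown_label y = label ?i (missing ?i y)" "crown_label x = label ?i x"
      using 3 unfolding crown_label_def by simp_all
    ultimately have "le x y \<longleftrightarrow> crown_label y \<noteq> crown_label x"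
      unfolding missingD(3)[OF i yL xL] by (simp only: eq_commute[of x])
    then show ?thesis using 3 by auto
  next
    case 4
    obtain z where z: "z \<in> P" "r z = r x + 2" "le z y" using below_at_rank[OF y] 4 by blast
    have "Suc (r x) < n" using rank_le[OF y] 4 by linarith
    then have "le x z" using le_two_levels_up[of "r x" x z] x z unfolding level_def by simp
    then show ?thesis using le_trans[OF x z(1) y _ z(3)] 4 by simp
  qed
qed

definition rotate :: "'a \<Rightarrow> 'a" where
  "rotate x = inv_into (level (r x)) (label (r x)) ((crown_label x + 1) mod 3)"

lemma rotateD:
  assumes x: "x \<in> P"
  shows "rotate x \<in> P" "r (rotate x) = r x" "crown_label (rotate x) = (crown_label x + 1) mod 3"
proof -
  have bij: "bij_betw (label (r x)) (level (r x)) {0..<3}" using bij_label rank_le[OF x] by blast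
  have im: "(crown_label x + 1) mod 3 \<in> label (r x) ` level (r x)"
    using bij unfolding bij_betw_def by simp
  have "rotate x \<in> level (r x)" unfolding rotate_def by (rule inv_into_into[OF im])
  then show "rotate x \<in> P" "r (rotate x) = r x" unfolding level_def by auto
  moreover have "label (r x) (rotate x) = (crown_label x + 1) mod 3"
    unfolding rotate_def by (rule f_inv_into_f[OF im])
  ultimately show "crown_label (rotate x) = (crown_label x + 1) mod 3"
    unfolding crown_label_def by simp
qed

lemma crown_stack_automorphic: "automorphic P le"
  unfolding automorphic_iff
proof (intro exI conjI)
  have inj: "inj_on rotate P"
  proof (rule inj_onI)
    fix x y assume x: "x \<in> P" and y: "y \<in> P" and e: "rotate x = rotate y"
    then have "r x = r y" "crown_label x = crown_label y"
      using rotateD[OF x] rotateD[OF y] Suc_mod_3_eq_iff crown_label_lt_3 by metis+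
    then show "x = y" using crown_label_inj x y by blast
  qed
  moreover have "rotate ` P \<subseteq> P" using rotateD(1) by blast
  ultimately have "bij_betw rotate P P"
    using endo_inj_surj[OF finite_carrier] unfolding bij_betw_def by blast
  moreover have "le x y \<longleftrightarrow> le (rotate x) (rotate y)" if x: "x \<in> P" and y: "y \<in> P" for x y
  proof -
    have "rotate x = rotate y \<longleftrightarrow> x = y" using inj_on_eq_iff[OF inj x y] .
    moreover have "crown_label (rotate y) = crown_label (rotate x) \<longleftrightarrow> crown_label y = crown_label x"
      using rotateD(3)[OF x] rotateD(3)[OF y] Suc_mod_3_eq_iff crown_label_lt_3 x y by simp
    ultimately show ?thesis
      using le_iff_crown_labels[OF x y] le_iff_crown_labels[OF rotateD(1)[OF x] rotateD(1)[OF y]]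
        rotateD(2)[OF x] rotateD(2)[OF y] by simp
  qed
  ultimately show "order_automorphism P le rotate" unfolding order_automorphism_def by blast
  show "\<forall>x\<in>P. rotate x \<noteq> x"
  proof
    fix x assume x: "x \<in> P"
    have "crown_label x = 0 \<or> crown_label x = 1 \<or> crown_label x = 2"
      using crown_label_lt_3[OF x] by auto
    then have "(crown_label x + 1) mod 3 \<noteq> crown_label x" by auto
    then show "rotate x \<noteq> x" using rotateD(3)[OF x] by metis
  qed
qed

end

sublocale ranked_poset \<subseteq> graded_poset P le "rank_in P le" n
  by unfold_locales (rule grading_rank_in)

lemma (in ranked_poset) levels_eq_level_Un: "levels P le i (i + 1) = level i \<union> level (Suc i)"
  unfolding levels_def level_def by auto

lemma six_stack_automorphic:
  assumes fin: "finite B" and po: "poset_on B le" and stack: "six_stack B le"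
  shows "automorphic B le"
proof -
  obtain n where n: "1 \<le> n" "ranked_of_rank B le n"
    and iso: "\<forall>i<n. order_iso (levels B le i (i + 1)) le C6 C6_le"
    using stack unfolding six_stack_def by blast
  interpret ranked_poset B le n using fin po n(2) by unfold_locales
  interpret crown_stack B le "rank_in B le" n
  proof
    show "1 \<le> n" by (rule n(1))
    show "crown_levels (level i) (level (Suc i)) le" if "i < n" for i
      using crown_levels_if_order_iso_C6 iso that levels_eq_level_Un by metis
  qed
  show ?thesis by (rule crown_stack_automorphic)
qed

lemma two_antichain_automorphic:
  assumes "two_antichain B le" "poset_on B le"
  shows "automorphic B le"
proof -
  obtain a b where ab: "B = {a, b}" "a \<noteq> b"
    using assms(1) unfolding two_antichain_def card_2_iff by blast
  have anti: "\<forall>x\<in>B. \<forall>y\<in>B. le x y \<longrightarrow> x = y"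
    using assms(1) unfolding two_antichain_def antichain_in_def by blast
  have refl: "\<forall>x\<in>B. le x x" using assms(2) unfolding poset_on_def by blast
  have le: "le a a" "le b b" "\<not> le a b" "\<not> le b a" using anti refl ab by auto
  define f where "f x = (if x = a then b else a)" for x
  have f: "f a = b" "f b = a" unfolding f_def using ab(2) by auto
  have "bij_betw f B B" unfolding bij_betw_def inj_on_def ab using f ab(2) by auto
  moreover have "\<forall>x\<in>B. \<forall>y\<in>B. le x y \<longleftrightarrow> le (f x) (f y)" unfolding ab using f le by auto
  moreover have "\<forall>x\<in>B. f x \<noteq> x" unfolding ab using f ab(2) by auto
  ultimately show ?thesis unfolding automorphic_def by blast
qed

definition ordinal_sum_of :: "'a set list \<Rightarrow> 'a set \<Rightarrow> ('a \<Rightarrow> 'a \<Rightarrow> bool) \<Rightarrow> bool" where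
  "ordinal_sum_of Bs P le \<longleftrightarrow> Bs \<noteq> [] \<and> \<Union>(set Bs) = P \<and>
      (\<forall>i<length Bs. \<forall>j<length Bs. i \<noteq> j \<longrightarrow> Bs ! i \<inter> Bs ! j = {}) \<and>
      (\<forall>i<length Bs. \<forall>j<length Bs. i < j \<longrightarrow> (\<forall>x\<in>Bs ! i. \<forall>y\<in>Bs ! j. strict le x y))"

lemma six_tower_iff:
  "six_tower P le \<longleftrightarrow>
     (\<exists>Bs. ordinal_sum_of Bs P le \<and> (\<forall>B\<in>set Bs. two_antichain B le \<or> six_stack B le))"
  unfolding six_tower_def ordinal_sum_of_def all_set_conv_all_nth by blast

lemma ordinal_sum_of_blocks:
  assumes os: "ordinal_sum_of Bs P le" and B: "B \<in> set Bs" "B' \<in> set Bs" "B \<noteq> B'"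
  shows "B \<inter> B' = {}" and "(\<forall>x\<in>B. \<forall>y\<in>B'. strict le x y) \<or> (\<forall>x\<in>B. \<forall>y\<in>B'. strict le y x)"
proof -
  obtain i j where ij: "i < length Bs" "j < length Bs" "B = Bs ! i" "B' = Bs ! j"
    using B(1,2) by (metis in_set_conv_nth)
  then have "i \<noteq> j" using B(3) by blast
  then show "B \<inter> B' = {}" using os ij unfolding ordinal_sum_of_def by blast
  show "(\<forall>x\<in>B. \<forall>y\<in>B'. strict le x y) \<or> (\<forall>x\<in>B. \<forall>y\<in>B'. strict le y x)"
    using os ij \<open>i \<noteq> j\<close> unfolding ordinal_sum_of_def by (metis linorder_neqE_nat)
qed

lemma ordinal_sum_of_subset: "ordinal_sum_of Bs P le \<Longrightarrow> B \<in> set Bs \<Longrightarrow> B \<subseteq> P"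
  unfolding ordinal_sum_of_def by blast

definition block_of :: "'a set list \<Rightarrow> 'a \<Rightarrow> 'a set" where
  "block_of Bs x = (THE B. B \<in> set Bs \<and> x \<in> B)"

lemma block_of_eq:
  assumes os: "ordinal_sum_of Bs P le" and B: "B \<in> set Bs" "x \<in> B"
  shows "block_of Bs x = B"
proof -
  have "\<exists>!B. B \<in> set Bs \<and> x \<in> B" using ordinal_sum_of_blocks(1)[OF os] B by blast
  then show ?thesis unfolding block_of_def using B by (simp add: the1_equality)
qed

lemma block_of:
  assumes os: "ordinal_sum_of Bs P le" and x: "x \<in> P"
  shows "block_of Bs x \<in> set Bs" "x \<in> block_of Bs x"
proof -
  obtain B where "B \<in> set Bs" "x \<in> B" using os x unfolding ordinal_sum_of_def by blast
  then show "block_of Bs x \<in> set Bs" "x \<in> block_of Bs x" using block_of_eq[OF os] by simp_all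
qed

lemma automorphic_ordinal_sum:
  assumes fin: "finite P" and po: "poset_on P le" and os: "ordinal_sum_of Bs P le"
    and aut: "\<forall>B\<in>set Bs. automorphic B le"
  shows "automorphic P le"
proof -
  have "\<forall>B\<in>set Bs. \<exists>f. order_automorphism B le f \<and> (\<forall>x\<in>B. f x \<noteq> x)"
    using aut unfolding automorphic_iff by blast
  from bchoice[OF this] obtain F
    where F: "\<And>B. B \<in> set Bs \<Longrightarrow> order_automorphism B le (F B)"
      "\<And>B x. B \<in> set Bs \<Longrightarrow> x \<in> B \<Longrightarrow> F B x \<noteq> x"
    by blast
  note blk_eq = block_of_eq[OF os] and blk = block_of[OF os]
  define sg where "sg x = F (block_of Bs x) x" for x
  have sg_blk: "sg x \<in> block_of Bs x" if "x \<in> P" for x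
    unfolding sg_def using order_automorphismD(1)[OF F(1)[OF blk(1)[OF that]] blk(2)[OF that]] .
  have sg: "block_of Bs (sg x) = block_of Bs x" "sg x \<in> P" "sg x \<noteq> x" if "x \<in> P" for x
    using blk_eq[OF blk(1)[OF that] sg_blk[OF that]] blk(1)[OF that] sg_blk[OF that]
      ordinal_sum_of_subset[OF os] F(2)[OF blk[OF that]] unfolding sg_def by auto
  have inj: "inj_on sg P"
  proof (rule inj_onI)
    fix x y assume x: "x \<in> P" and y: "y \<in> P" and e: "sg x = sg y"
    then have b: "block_of Bs x = block_of Bs y" using sg(1) by metis
    have "inj_on (F (block_of Bs x)) (block_of Bs x)"
      using order_automorphismD(4)[OF F(1)[OF blk(1)[OF x]]] .
    then show "x = y" using e blk(2)[OF x] blk(2)[OF y] unfolding sg_def b by (auto dest: inj_onD)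
  qed
  have "bij_betw sg P P"
    using endo_inj_surj[OF fin _ inj] inj sg(2) unfolding bij_betw_def by blast
  moreover have "le x y \<longleftrightarrow> le (sg x) (sg y)" if x: "x \<in> P" and y: "y \<in> P" for x y
  proof (cases "block_of Bs x = block_of Bs y")
    case True
    then show ?thesis
      using order_automorphismD(2)[OF F(1)[OF blk(1)[OF x]] blk(2)[OF x]] blk(2)[OF y]
      unfolding sg_def by simp
  next
    case False
    have not_ge: "\<not> le v u" if "strict le u v" "u \<in> P" "v \<in> P" for u v
      using that po unfolding poset_on_def strict_def by blast
    have "strict le x y \<and> strict le (sg x) (sg y) \<or> strict le y x \<and> strict le (sg y) (sg x)"
      using ordinal_sum_of_blocks(2)[OF os blk(1)[OF x] blk(1)[OF y] False]
        blk(2)[OF x] blk(2)[OF y] sg_blk[OF x] sg_blk[OF y] by blast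
    then show ?thesis using not_ge x y sg(2)[OF x] sg(2)[OF y] unfolding strict_def by blast
  qed
  ultimately show ?thesis unfolding automorphic_def using sg(3) by blast
qed

lemma six_tower_automorphic:
  assumes "finite Q" "poset_on Q le" "six_tower Q le"
  shows "automorphic Q le"
proof -
  obtain Bs where Bs: "ordinal_sum_of Bs Q le" "\<forall>B\<in>set Bs. two_antichain B le \<or> six_stack B le"
    using assms(3) unfolding six_tower_iff by blast
  have "automorphic B le" if B: "B \<in> set Bs" for B
  proof -
    have "B \<subseteq> Q" using ordinal_sum_of_subset[OF Bs(1) B] .
    then have "finite B" "poset_on B le"
      using finite_subset assms(1,2) unfolding poset_on_def by blast+
    then show ?thesis using Bs(2) B two_antichain_automorphic six_stack_automorphic by blast
  qed
  then show ?thesis using automorphic_ordinal_sum[OF assms(1,2) Bs(1)] by blast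
qed

section \<open>Minimal automorphic posets of width three are six-towers\<close>

context graded_poset
begin

definition band :: "nat \<Rightarrow> nat \<Rightarrow> 'a set" where
  "band a b = {p\<in>P. a \<le> r p \<and> r p \<le> b}"

lemma graded_poset_band:
  assumes ab: "a \<le> b" "b \<le> n"
  shows "graded_poset (band a b) le (\<lambda>p. r p - a) (b - a)"
proof -
  have sub: "band a b \<subseteq> P" unfolding band_def by blast
  interpret B: finite_poset "band a b" le by (rule finite_poset_subset[OF sub])
  have mem: "p \<in> band a b \<longleftrightarrow> p \<in> P \<and> a \<le> r p \<and> r p \<le> b" for p unfolding band_def by simp
  have "grading (band a b) le (\<lambda>p. r p - a) (b - a)"
    unfolding grading_def
  proof (intro conjI ballI impI)
    fix p assume "p \<in> band a b"
    then show "r p - a \<le> b - a" using mem by auto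
  next
    fix x y assume "x \<in> band a b" "y \<in> band a b" "strict le x y"
    then show "r x - a < r y - a" using rank_strict_mono[of x y] mem by fastforce
  next
    fix p assume p: "p \<in> band a b" "0 < r p - a"
    then obtain q where q: "q \<in> P" "strict le q p" "r q + 1 = r p"
      using lower_cover mem by fastforce
    then have "q \<in> band a b" "r q - a + 1 = r p - a" using p mem by auto
    then show "\<exists>q\<in>band a b. strict le q p \<and> r q - a + 1 = r p - a" using q by blast
  next
    fix p assume p: "p \<in> band a b" "r p - a < b - a"
    then obtain q where q: "q \<in> P" "strict le p q" "r q = r p + 1"
      using upper_cover mem ab by fastforce
    then have "q \<in> band a b" "r q - a = r p - a + 1" using p mem by auto
    then show "\<exists>q\<in>band a b. strict le p q \<and> r q - a = r p - a + 1" using q by blast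
  next
    fix x y assume x: "x \<in> band a b" and y: "y \<in> band a b"
      and xy: "strict le x y \<and> r x - a + 1 < r y - a"
    then obtain z where z: "z \<in> P" "strict le x z" "strict le z y"
      using strictly_between mem by fastforce
    then have "r x < r z" "r z < r y" using rank_strict_mono x y mem by blast+
    then have "z \<in> band a b" using z(1) x y mem by auto
    then show "\<exists>z\<in>band a b. strict le x z \<and> strict le z y" using z by blast
  qed
  then show ?thesis by unfold_locales
qed

end

definition next_cut :: "(nat \<Rightarrow> bool) \<Rightarrow> nat \<Rightarrow> nat \<Rightarrow> nat" where
  "next_cut c n s = (LEAST t. s \<le> t \<and> (t = n \<or> c t))"

text \<open>The intervals [a, b] into which the cut points t (those with c t) split [s..n]; the fuel f
  bounds the number of intervals.\<close>
primrec segments :: "(nat \<Rightarrow> bool) \<Rightarrow> nat \<Rightarrow> nat \<Rightarrow> nat \<Rightarrow> (nat \<times> nat) list" where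
  "segments c n s 0 = []"
| "segments c n s (Suc f) =
     (if n < s then [] else (s, next_cut c n s) # segments c n (Suc (next_cut c n s)) f)"

lemma next_cut:
  fixes s n :: nat and c :: "nat \<Rightarrow> bool"
  assumes "s \<le> n"
  defines "t \<equiv> next_cut c n s"
  shows "s \<le> t" "t \<le> n" "t = n \<or> c t" "\<And>k. s \<le> k \<Longrightarrow> k < t \<Longrightarrow> \<not> c k"
proof -
  let ?Q = "\<lambda>t. s \<le> t \<and> (t = n \<or> c t)"
  have Q: "?Q n" using assms(1) by simp
  have "?Q t" unfolding t_def next_cut_def by (rule LeastI[of ?Q, OF Q])
  then show "s \<le> t" "t = n \<or> c t" by auto
  show "t \<le> n" unfolding t_def next_cut_def by (rule Least_le[of ?Q, OF Q])
  fix k assume "s \<le> k" "k < t"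
  then show "\<not> c k" using not_less_Least[of k ?Q] unfolding t_def next_cut_def by blast
qed

lemma segments_intervals:
  "\<forall>ab\<in>set (segments c n s f). s \<le> fst ab \<and> fst ab \<le> snd ab \<and> snd ab \<le> n \<and>
     (\<forall>k. fst ab \<le> k \<and> k < snd ab \<longrightarrow> \<not> c k) \<and> (snd ab = n \<or> c (snd ab)) \<and>
     (fst ab = s \<or> (0 < fst ab \<and> c (fst ab - 1)))"
proof (induction f arbitrary: s)
  case 0
  then show ?case by simp
next
  case (Suc f)
  show ?case
  proof (cases "n < s")
    case True
    then show ?thesis by simp
  next
    case False
    then have sn: "s \<le> n" by simp
    define t where "t = next_cut c n s"
    note lp = next_cut[OF sn, where c=c, folded t_def]
    have eq: "segments c n s (Suc f) = (s, t) # segments c n (Suc t) f"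
      using False unfolding t_def by simp
    show ?thesis unfolding eq
    proof
      fix ab assume ab: "ab \<in> set ((s, t) # segments c n (Suc t) f)"
      show "s \<le> fst ab \<and> fst ab \<le> snd ab \<and> snd ab \<le> n \<and>
         (\<forall>k. fst ab \<le> k \<and> k < snd ab \<longrightarrow> \<not> c k) \<and> (snd ab = n \<or> c (snd ab)) \<and>
         (fst ab = s \<or> (0 < fst ab \<and> c (fst ab - 1)))"
      proof (cases "ab = (s, t)")
        case True
        then show ?thesis using lp by auto
      next
        case False
        then have abt: "ab \<in> set (segments c n (Suc t) f)" using ab by simp
        have ih: "Suc t \<le> fst ab \<and> fst ab \<le> snd ab \<and> snd ab \<le> n \<and>
          (\<forall>k. fst ab \<le> k \<and> k < snd ab \<longrightarrow> \<not> c k) \<and> (snd ab = n \<or> c (snd ab)) \<and>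
          (fst ab = Suc t \<or> (0 < fst ab \<and> c (fst ab - 1)))" using Suc.IH abt by blast
        have "t \<noteq> n" using ih by linarith
        then have ct: "c t" using lp(3) by blast
        have "fst ab = Suc t \<or> (0 < fst ab \<and> c (fst ab - 1))" using ih by blast
        then have "0 < fst ab \<and> c (fst ab - 1)" using ct by auto
        then show ?thesis using ih lp(1) by auto
      qed
    qed
  qed
qed

lemma segments_cover:
  "n + 1 \<le> f + s \<Longrightarrow> s \<le> k \<Longrightarrow> k \<le> n \<Longrightarrow> \<exists>ab\<in>set (segments c n s f). fst ab \<le> k \<and> k \<le> snd ab"
proof (induction f arbitrary: s)
  case 0
  then show ?case by simp
next
  case (Suc f)
  then have sn: "s \<le> n" by simp
  define t where "t = next_cut c n s"
  note lp = next_cut[OF sn, where c=c, folded t_def]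
  have eq: "segments c n s (Suc f) = (s, t) # segments c n (Suc t) f"
    using sn unfolding t_def by simp
  show ?case
  proof (cases "k \<le> t")
    case True
    then show ?thesis unfolding eq using Suc.prems by auto
  next
    case False
    have "\<exists>ab\<in>set (segments c n (Suc t) f). fst ab \<le> k \<and> k \<le> snd ab"
      using Suc.IH[of "Suc t"] Suc.prems lp(1) False by simp
    then show ?thesis unfolding eq by auto
  qed
qed

lemma segments_sorted:
  "i < j \<Longrightarrow> j < length (segments c n s f) \<Longrightarrow> snd (segments c n s f ! i) < fst (segments c n s f ! j)"
proof (induction f arbitrary: s i j)
  case 0
  then show ?case by simp
next
  case (Suc f)
  then have sn: "s \<le> n" by (cases "n < s") auto
  define t where "t = next_cut c n s"
  have eq: "segments c n s (Suc f) = (s, t) # segments c n (Suc t) f"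
    using sn unfolding t_def by simp
  show ?case
  proof (cases i)
    case 0
    obtain j' where j: "j = Suc j'" using Suc.prems 0 by (cases j) auto
    have "j' < length (segments c n (Suc t) f)" using Suc.prems eq j by simp
    then have "segments c n (Suc t) f ! j' \<in> set (segments c n (Suc t) f)" by simp
    then have "Suc t \<le> fst (segments c n (Suc t) f ! j')"
      using segments_intervals[of c n "Suc t" f] by blast
    then show ?thesis unfolding eq using 0 j by simp
  next
    case (Suc i')
    obtain j' where j: "j = Suc j'" using Suc.prems \<open>i = Suc i'\<close> by (cases j) auto
    have "i' < j'" "j' < length (segments c n (Suc t) f)" using Suc.prems eq j \<open>i = Suc i'\<close> by auto
    then have "snd (segments c n (Suc t) f ! i') < fst (segments c n (Suc t) f ! j')"
      using Suc.IH by blast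
    then show ?thesis unfolding eq using \<open>i = Suc i'\<close> j by simp
  qed
qed

context graded_poset
begin

definition level_blocks :: "'a set list" where
  "level_blocks = map (\<lambda>(a, b). band a b) (segments levels_complete n 0 (Suc n))"

lemma level_blocksE:
  assumes "B \<in> set level_blocks"
  obtains a b where "B = band a b" "a \<le> b" "b \<le> n"
    "\<forall>k. a \<le> k \<and> k < b \<longrightarrow> \<not> levels_complete k"
    "a = 0 \<or> levels_complete (a - 1)" "b = n \<or> levels_complete b"
proof -
  have "B \<in> (\<lambda>(a, b). band a b) ` set (segments levels_complete n 0 (Suc n))"
    using assms unfolding level_blocks_def by simp
  then obtain a b where "(a, b) \<in> set (segments levels_complete n 0 (Suc n))" "B = band a b"
    by auto
  then show thesis using that segments_intervals[of levels_complete n 0 "Suc n"] by fastforce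
qed

lemma ordinal_sum_of_level_blocks: "ordinal_sum_of level_blocks P le"
proof -
  define S where "S = segments levels_complete n 0 (Suc n)"
  have S: "a \<le> b" "b \<le> n" "b = n \<or> levels_complete b" if "(a, b) \<in> set S" for a b
    using bspec[OF segments_intervals[of levels_complete n 0 "Suc n"] that[unfolded S_def]] by auto
  have blocks: "level_blocks = map (\<lambda>(a, b). band a b) S" unfolding level_blocks_def S_def ..
  have len: "length level_blocks = length S" unfolding blocks by simp
  have nth: "level_blocks ! i = band (fst (S ! i)) (snd (S ! i))" if "i < length S" for i
    using that unfolding blocks by (simp add: case_prod_beta)
  have ordered: "strict le x y"
    if ij: "i < j" "j < length level_blocks"
      and x: "x \<in> level_blocks ! i" and y: "y \<in> level_blocks ! j"
    for i j x y
  proof -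
    have i: "i < length S" and j: "j < length S" using ij len by simp_all
    obtain a b a' b' where ab: "S ! i = (a, b)" "S ! j = (a', b')" by fastforce
    have "(a, b) \<in> set S" using nth_mem[OF i] ab(1) by simp
    moreover have "b < a'" using segments_sorted[of i j] ij j ab unfolding S_def by fastforce
    moreover have "a' \<le> n" using S[of a' b'] nth_mem[OF j] ab(2) by simp
    ultimately have "levels_complete b" using S(3) by fastforce
    moreover have "x \<in> P" "r x \<le> b" using x nth[OF i] ab(1) unfolding band_def by auto
    moreover have "y \<in> P" "Suc b \<le> r y" using y nth[OF j] ab(2) \<open>b < a'\<close> unfolding band_def by auto
    ultimately show "strict le x y" using levels_complete_strict by blast
  qed
  have "\<Union>(set level_blocks) = P"
  proof
    show "\<Union>(set level_blocks) \<subseteq> P" unfolding level_blocks_def band_def by auto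
    show "P \<subseteq> \<Union>(set level_blocks)"
    proof
      fix p assume p: "p \<in> P"
      have "\<exists>ab\<in>set S. fst ab \<le> r p \<and> r p \<le> snd ab"
        unfolding S_def using rank_le[OF p] by (intro segments_cover) simp_all
      then obtain ab where ab: "ab \<in> set S" "fst ab \<le> r p" "r p \<le> snd ab" by blast
      then have "p \<in> band (fst ab) (snd ab)" "band (fst ab) (snd ab) \<in> set level_blocks"
        using p unfolding blocks band_def by (auto simp: case_prod_beta)
      then show "p \<in> \<Union>(set level_blocks)" by blast
    qed
  qed
  moreover have "level_blocks ! i \<inter> level_blocks ! j = {}"
    if "i < length level_blocks" "j < length level_blocks" "i \<noteq> j" for i j
  proof -
    have "\<not> strict le x x" for x unfolding strict_def by simp
    then show ?thesis using ordered that by (metis disjoint_iff linorder_neqE_nat)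
  qed
  moreover have "level_blocks \<noteq> []" unfolding level_blocks_def by simp
  ultimately show ?thesis unfolding ordinal_sum_of_def using ordered by blast
qed

end

context minimal_automorphic_graded_width3
begin

lemma six_stack_band:
  assumes ab: "a < b" "b \<le> n" and no_cut: "\<forall>k. a \<le> k \<and> k < b \<longrightarrow> \<not> levels_complete k"
  shows "six_stack (band a b) le"
proof -
  interpret B: graded_poset "band a b" le "\<lambda>p. r p - a" "b - a"
    using graded_poset_band ab by simp
  have "level a \<subseteq> band a b" using ab unfolding level_def band_def by auto
  then have "band a b \<noteq> {}" using level_nonempty ab by fastforce
  then have ranked: "ranked_of_rank (band a b) le (b - a)" by (rule B.ranked_of_rank)
  have "order_iso (levels (band a b) le i (i + 1)) le C6 C6_le" if i: "i < b - a" for i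
  proof -
    let ?k = "a + i"
    have "levels (band a b) le i (i + 1) = level ?k \<union> level (Suc ?k)"
      using B.rank_in_eq i unfolding levels_def band_def level_def by auto
    moreover have crown: "crown_levels (level ?k) (level (Suc ?k)) le"
    proof -
      have "?k < n" "\<not> levels_complete ?k" using no_cut i ab by auto
      then show ?thesis using level_pair_cases by blast
    qed
    moreover have down: "\<forall>x\<in>level ?k. \<forall>y\<in>level (Suc ?k). \<not> le y x"
    proof (intro ballI notI)
      fix x y assume "x \<in> level ?k" "y \<in> level (Suc ?k)" "le y x"
      then have "r y \<le> r x" "r x = ?k" "r y = Suc ?k"
        using rank_mono[of y x] unfolding level_def by auto
      then show False by simp
    qed
    moreover have anti: "\<forall>x\<in>level j. \<forall>y\<in>level j. le x y \<longleftrightarrow> x = y" for j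
      using level_le_iff_eq by blast
    ultimately show ?thesis using order_iso_C6_if_crown_levels[OF crown anti anti down] by simp
  qed
  then show ?thesis unfolding six_stack_def using ranked ab by (intro exI[of _ "b - a"]) auto
qed

lemma two_antichain_isolated_level:
  assumes "isolated_level k"
  shows "two_antichain (level k) le"
proof -
  have "card (level k) = 2"
    using card_level card_isolated_level_ne_3[OF assms] assms unfolding isolated_level_def by blast
  then show ?thesis unfolding two_antichain_def
    using level_antichain unfolding antichain_in_def level_def by blast
qed

lemma six_tower: "six_tower P le"
proof -
  have "two_antichain B le \<or> six_stack B le" if "B \<in> set level_blocks" for B
    using that
  proof (rule level_blocksE)
    fix a b assume ab: "B = band a b" "a \<le> b" "b \<le> n"
      "\<forall>k. a \<le> k \<and> k < b \<longrightarrow> \<not> levels_complete k"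
      "a = 0 \<or> levels_complete (a - 1)" "b = n \<or> levels_complete b"
    show ?thesis
    proof (cases "a = b")
      case True
      then have "isolated_level a" "B = level a"
        using ab unfolding isolated_level_def band_def level_def by auto
      then show ?thesis using two_antichain_isolated_level by simp
    next
      case False
      then show ?thesis using six_stack_band ab by simp
    qed
  qed
  then show ?thesis unfolding six_tower_iff using ordinal_sum_of_level_blocks by blast
qed

end

theorem corollary3p6:
  fixes P :: "'a set" and le :: "'a \<Rightarrow> 'a \<Rightarrow> bool"
  assumes "finite P" and "P \<noteq> {}" and "poset_on P le"
    and "ranked P le" and "width_le P le 3"
  shows "(minimal_automorphic P le \<longrightarrow> six_tower P le) \<and>
         (\<forall>(Q :: 'b set) leQ. finite Q \<and> poset_on Q leQ \<and> six_tower Q leQ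
              \<longrightarrow> automorphic Q leQ)"
proof (intro conjI impI allI)
  assume minimal: "minimal_automorphic P le"
  obtain n where "ranked_of_rank P le n" using assms(4) unfolding ranked_def by blast
  then interpret ranked_poset P le n using assms(1,3) by unfold_locales
  interpret minimal_automorphic_graded_width3 P le "rank_in P le" n
    using minimal assms(2,5) by unfold_locales
  show "six_tower P le" by (rule six_tower)
next
  fix Q :: "'b set" and leQ
  assume "finite Q \<and> poset_on Q leQ \<and> six_tower Q leQ"
  then show "automorphic Q leQ" using six_tower_automorphic by blast
qed

end
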